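(* Let $(\mathfrak g,\triangleright)$ be a post-Lie algebra and $\phi:\mathcal U(\overline{\mathfrak g})\to\mathcal U_\ast(\mathfrak g)$ the Hopf algebra isomorphism extending the identity of $V$. For all $n\ge1$ and $x_1,\dots,x_n\in\mathfrak g$, $$\phi(x_1.\,x_2.\,\cdots.\,x_n)=x_1\phi(x_2.\,\cdots.\,x_n)+x_1\triangleright\phi(x_2.\,\cdots.\,x_n)$$ (with $\phi(\mathbf 1)=\mathbf 1$), and consequently $$\phi(x_1.\,\cdots.\,x_n)=x_1\ast\cdots\ast x_n=\sum_{\pi\in P_n}X_\pi .$$ Here $P_n$ is the set of all set partitions of $\{1,\dots,n\}$; for $\pi=\{\pi_1,\dots,\pi_m\}$ the blocks are ordered so that $\max\pi_1<\max\pi_2<\dots<\max\pi_m$; for a block $\pi_i=\{k_1<k_2<\dots<k_l\}$ one sets $x(\pi_i):=x_{k_1}\triangleright(x_{k_2}\triangleright(\cdots\triangleright(x_{k_{l-1}}\triangleright x_{k_l})\cdots))\in\mathfrak g$; and $X_\pi:=x(\pi_1)x(\pi_2)\cdots x(\pi_m)$, the product taken in $\mathcal U(\mathfrak g)$.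
   Context: All vector spaces are finite dimensional over $\mathbb K=\mathbb R$ or $\mathbb C$. A (left) post-Lie algebra is a Lie algebra $\mathfrak g=(V,[\cdot,\cdot])$ with a bilinear product $\triangleright:V\otimes V\to V$ such that for all $x,y,z$: $x\triangleright[y,z]=[x\triangleright y,z]+[y,x\triangleright z]$ and $[x,y]\triangleright z=a_\triangleright(x,y,z)-a_\triangleright(y,x,z)$, where $a_\triangleright(x,y,z)=x\triangleright(y\triangleright z)-(x\triangleright y)\triangleright z$. The bracket $[[x,y]]:=x\triangleright y-y\triangleright x+[x,y]$ is a Lie bracket; $\overline{\mathfrak g}:=(V,[[\cdot,\cdot]])$, and the product of $\mathcal U(\overline{\mathfrak g})$ is written $A.\,B$. $\mathcal U(\mathfrak g)$ denotes the universal enveloping algebra with its usual cocommutative Hopf structure (product written as concatenation, unit $\mathbf 1$, elements of $\mathfrak g$ primitive, counit $\epsilon$); Sweedler notation $\Delta A=A_{(1)}\otimes A_{(2)}$. The post-Lie product extends uniquely to a bilinear product $\triangleright$ on $\mathcal U(\mathfrak g)$ such that, for $A,B,C\in\mathcal U(\mathfrak g)$, $x\in\mathfrak g$: $\mathbf 1\triangleright A=A$, $A\triangleright\mathbf 1=\epsilon(A)\mathbf 1$, $xA\triangleright B=x\triangleright(A\triangleright B)-(x\triangleright A)\triangleright B$, $A\triangleright BC=(A_{(1)}\triangleright B)(A_{(2)}\triangleright C)$. Define $A\ast B:=A_{(1)}(A_{(2)}\triangleright B)$; $\mathcal U_\ast(\mathfrak g):=(\mathcal U(\mathfrak g),\ast,\mathbf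 1,\Delta,\epsilon)$ is a Hopf algebra. It is known that the identity map $\overline{\mathfrak g}\to\mathfrak g$ extends uniquely to a Hopf algebra isomorphism $\phi:\mathcal U(\overline{\mathfrak g})\to\mathcal U_\ast(\mathfrak g)$ (in particular an algebra morphism, so $\phi(x_1.\,\cdots.\,x_n)=x_1\ast\cdots\ast x_n$). *)

theory Defs
  imports Complex_Main "HOL-Library.Disjoint_Sets"
begin

text \<open>The ground field: the scalars 'k range over a real normed field; by the
Gelfand--Mazur/Mazur theorem such a field is (isomorphic to) R or C.
V is a type 'v with scalar multiplication sc.\<close>

definition lie_algebra :: "('k::field \<Rightarrow> 'v::ab_group_add \<Rightarrow> 'v) \<Rightarrow> ('v \<Rightarrow> 'v \<Rightarrow> 'v) \<Rightarrow> bool" where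
  "lie_algebra sc br \<longleftrightarrow>
     vector_space sc \<and> (\<exists>B. finite B \<and> module.span sc B = UNIV) \<and>
     (\<forall>x y z. br (x + y) z = br x z + br y z) \<and>
     (\<forall>x y z. br x (y + z) = br x y + br x z) \<and>
     (\<forall>c x y. br (sc c x) y = sc c (br x y)) \<and>
     (\<forall>c x y. br x (sc c y) = sc c (br x y)) \<and>
     (\<forall>x. br x x = 0) \<and>
     (\<forall>x y z. br x (br y z) + br y (br z x) + br z (br x y) = 0)"

definition post_lie_algebra :: "('k::field \<Rightarrow> 'v::ab_group_add \<Rightarrow> 'v) \<Rightarrow> ('v \<Rightarrow> 'v \<Rightarrow> 'v) \<Rightarrow> ('v \<Rightarrow> 'v \<Rightarrow> 'v) \<Rightarrow> bool" where
  "post_lie_algebra sc br tri \<longleftrightarrow>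
     lie_algebra sc br \<and>
     (\<forall>x y z. tri (x + y) z = tri x z + tri y z) \<and>
     (\<forall>x y z. tri x (y + z) = tri x y + tri x z) \<and>
     (\<forall>c x y. tri (sc c x) y = sc c (tri x y)) \<and>
     (\<forall>c x y. tri x (sc c y) = sc c (tri x y)) \<and>
     (\<forall>x y z. tri x (br y z) = br (tri x y) z + br y (tri x z)) \<and>
     (\<forall>x y z. tri (br x y) z =
        (tri x (tri y z) - tri (tri x y) z) - (tri y (tri x z) - tri (tri y x) z))"

definition bar_bracket :: "('v::ab_group_add \<Rightarrow> 'v \<Rightarrow> 'v) \<Rightarrow> ('v \<Rightarrow> 'v \<Rightarrow> 'v) \<Rightarrow> 'v \<Rightarrow> 'v \<Rightarrow> 'v" where
  "bar_bracket br tri x y = tri x y - tri y x + br x y"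

text \<open>The free associative unital algebra K<V> on the set V: finitely supported
functions from words over V to K.  The word u stands for the monomial u1 u2 ... un.
U(g) is K<V> modulo the two-sided ideal generated by the linearity relations
[x+y]-[x]-[y], [c x]-c[x] and the Lie relations [x][y]-[y][x]-[[x,y]]
(equivalently: tensor algebra T(V) modulo the usual ideal).  Elements of U(g) are
represented by elements of K<V>; equality in U(g) is the relation ueq.\<close>

type_synonym ('v, 'k) fa = "'v list \<Rightarrow> 'k"

definition fa_fin :: "('v, 'k::zero) fa \<Rightarrow> bool" where
  "fa_fin p \<longleftrightarrow> finite {w. p w \<noteq> 0}"

definition fa_word :: "'v list \<Rightarrow> ('v, 'k::{zero,one}) fa" where
  "fa_word u = (\<lambda>w. if w = u then 1 else 0)"

definition fa_one :: "('v, 'k::{zero,one}) fa" where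
  "fa_one = fa_word []"

definition fa_add :: "('v, 'k::plus) fa \<Rightarrow> ('v, 'k) fa \<Rightarrow> ('v, 'k) fa" where
  "fa_add p q = (\<lambda>w. p w + q w)"

definition fa_diff :: "('v, 'k::minus) fa \<Rightarrow> ('v, 'k) fa \<Rightarrow> ('v, 'k) fa" where
  "fa_diff p q = (\<lambda>w. p w - q w)"

definition fa_scale :: "'k::times \<Rightarrow> ('v, 'k) fa \<Rightarrow> ('v, 'k) fa" where
  "fa_scale c p = (\<lambda>w. c * p w)"

definition fa_mult :: "('v, 'k::comm_semiring_1) fa \<Rightarrow> ('v, 'k) fa \<Rightarrow> ('v, 'k) fa" where
  "fa_mult p q = (\<lambda>w. \<Sum>i\<le>length w. p (take i w) * q (drop i w))"

inductive_set fa_span :: "('v, 'k::comm_ring_1) fa set \<Rightarrow> ('v, 'k) fa set"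
  for S :: "('v, 'k) fa set" where
  zero: "(\<lambda>w. 0) \<in> fa_span S"
| step: "p \<in> S \<Longrightarrow> q \<in> fa_span S \<Longrightarrow> (\<lambda>w. c * p w + q w) \<in> fa_span S"

definition ue_relators :: "('k::comm_ring_1 \<Rightarrow> 'v::ab_group_add \<Rightarrow> 'v) \<Rightarrow> ('v \<Rightarrow> 'v \<Rightarrow> 'v) \<Rightarrow> ('v, 'k) fa set" where
  "ue_relators sc br =
     {fa_diff (fa_diff (fa_word [x + y]) (fa_word [x])) (fa_word [y]) | x y. True} \<union>
     {fa_diff (fa_word [sc c x]) (fa_scale c (fa_word [x])) | c x. True} \<union>
     {fa_diff (fa_diff (fa_word [x, y]) (fa_word [y, x])) (fa_word [br x y]) | x y. True}"

definition ue_ideal :: "('k::comm_ring_1 \<Rightarrow> 'v::ab_group_add \<Rightarrow> 'v) \<Rightarrow> ('v \<Rightarrow> 'v \<Rightarrow> 'v) \<Rightarrow> ('v, 'k) fa set" where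
  "ue_ideal sc br =
     fa_span {fa_mult (fa_mult (fa_word u) r) (fa_word v) | u r v. r \<in> ue_relators sc br}"

definition ueq :: "('k::comm_ring_1 \<Rightarrow> 'v::ab_group_add \<Rightarrow> 'v) \<Rightarrow> ('v \<Rightarrow> 'v \<Rightarrow> 'v)
    \<Rightarrow> ('v, 'k) fa \<Rightarrow> ('v, 'k) fa \<Rightarrow> bool" where
  "ueq sc br p q \<longleftrightarrow> fa_diff p q \<in> ue_ideal sc br"

definition fa_eps :: "('v, 'k) fa \<Rightarrow> 'k" where
  "fa_eps p = p []"

text \<open>The coproduct of a monomial u1...un is the sum over S of u_S (x) u_(complement S)
(all ui primitive), where u_S = nths u S is the ordered subword on the positions S.\<close>

text \<open>T represents the extension of the post-Lie product to U(g) (a map on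
representatives, well defined on classes).  The axioms are those of the context,
with Sweedler notation unfolded on monomials (the first argument extends linearly).\<close>
definition ext_post_lie :: "('k::comm_ring_1 \<Rightarrow> 'v::ab_group_add \<Rightarrow> 'v) \<Rightarrow> ('v \<Rightarrow> 'v \<Rightarrow> 'v) \<Rightarrow> ('v \<Rightarrow> 'v \<Rightarrow> 'v)
    \<Rightarrow> (('v, 'k) fa \<Rightarrow> ('v, 'k) fa \<Rightarrow> ('v, 'k) fa) \<Rightarrow> bool" where
  "ext_post_lie sc br tri T \<longleftrightarrow>
     (\<forall>p q. fa_fin p \<longrightarrow> fa_fin q \<longrightarrow> fa_fin (T p q)) \<and>
     (\<forall>p p' q q'. fa_fin p \<longrightarrow> fa_fin p' \<longrightarrow> fa_fin q \<longrightarrow> fa_fin q' \<longrightarrow>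
        ueq sc br p p' \<longrightarrow> ueq sc br q q' \<longrightarrow> ueq sc br (T p q) (T p' q')) \<and>
     (\<forall>c p p' q. fa_fin p \<longrightarrow> fa_fin p' \<longrightarrow> fa_fin q \<longrightarrow>
        ueq sc br (T (fa_add (fa_scale c p) p') q) (fa_add (fa_scale c (T p q)) (T p' q))) \<and>
     (\<forall>c p q q'. fa_fin p \<longrightarrow> fa_fin q \<longrightarrow> fa_fin q' \<longrightarrow>
        ueq sc br (T p (fa_add (fa_scale c q) q')) (fa_add (fa_scale c (T p q)) (T p q'))) \<and>
     (\<forall>x y. ueq sc br (T (fa_word [x]) (fa_word [y])) (fa_word [tri x y])) \<and>
     (\<forall>p. fa_fin p \<longrightarrow> ueq sc br (T fa_one p) p) \<and>
     (\<forall>p. fa_fin p \<longrightarrow> ueq sc br (T p fa_one) (fa_scale (fa_eps p) fa_one)) \<and>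
     (\<forall>x p q. fa_fin p \<longrightarrow> fa_fin q \<longrightarrow>
        ueq sc br (T (fa_mult (fa_word [x]) p) q)
                  (fa_diff (T (fa_word [x]) (T p q)) (T (T (fa_word [x]) p) q))) \<and>
     (\<forall>u p q. fa_fin p \<longrightarrow> fa_fin q \<longrightarrow>
        ueq sc br (T (fa_word u) (fa_mult p q))
           (\<lambda>w. \<Sum>S\<in>Pow {..<length u}.
                 fa_mult (T (fa_word (nths u S)) p) (T (fa_word (nths u (- S))) q) w))"

text \<open>A * B = A_(1) (A_(2) |> B), on a representative A = sum_w A(w) w.\<close>
definition fa_star :: "(('v, 'k::comm_ring_1) fa \<Rightarrow> ('v, 'k) fa \<Rightarrow> ('v, 'k) fa)
    \<Rightarrow> ('v, 'k) fa \<Rightarrow> ('v, 'k) fa \<Rightarrow> ('v, 'k) fa" where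
  "fa_star T p q = (\<lambda>w. \<Sum>u\<in>{u. p u \<noteq> 0}. p u *
      (\<Sum>S\<in>Pow {..<length u}. fa_mult (fa_word (nths u S)) (T (fa_word (nths u (- S))) q) w))"

definition star_prod :: "(('v, 'k::comm_ring_1) fa \<Rightarrow> ('v, 'k) fa \<Rightarrow> ('v, 'k) fa)
    \<Rightarrow> 'v list \<Rightarrow> ('v, 'k) fa" where
  "star_prod T xs = foldr (\<lambda>x acc. fa_star T (fa_word [x]) acc) xs fa_one"

text \<open>By the context this
is exactly the Hopf isomorphism phi.\<close>
definition phi_hom :: "('k::comm_ring_1 \<Rightarrow> 'v::ab_group_add \<Rightarrow> 'v) \<Rightarrow> ('v \<Rightarrow> 'v \<Rightarrow> 'v) \<Rightarrow> ('v \<Rightarrow> 'v \<Rightarrow> 'v)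
    \<Rightarrow> (('v, 'k) fa \<Rightarrow> ('v, 'k) fa \<Rightarrow> ('v, 'k) fa) \<Rightarrow> (('v, 'k) fa \<Rightarrow> ('v, 'k) fa) \<Rightarrow> bool" where
  "phi_hom sc br tri T \<Phi> \<longleftrightarrow>
     (\<forall>p. fa_fin p \<longrightarrow> fa_fin (\<Phi> p)) \<and>
     (\<forall>p p'. fa_fin p \<longrightarrow> fa_fin p' \<longrightarrow> ueq sc (bar_bracket br tri) p p' \<longrightarrow> ueq sc br (\<Phi> p) (\<Phi> p')) \<and>
     (\<forall>c p q. fa_fin p \<longrightarrow> fa_fin q \<longrightarrow>
        ueq sc br (\<Phi> (fa_add (fa_scale c p) q)) (fa_add (fa_scale c (\<Phi> p)) (\<Phi> q))) \<and>
     ueq sc br (\<Phi> fa_one) fa_one \<and>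
     (\<forall>p q. fa_fin p \<longrightarrow> fa_fin q \<longrightarrow>
        ueq sc br (\<Phi> (fa_mult p q)) (fa_star T (\<Phi> p) (\<Phi> q))) \<and>
     (\<forall>x. ueq sc br (\<Phi> (fa_word [x])) (fa_word [x]))"

fun nest :: "('v::zero \<Rightarrow> 'v \<Rightarrow> 'v) \<Rightarrow> 'v list \<Rightarrow> 'v" where
  "nest f [] = 0"
| "nest f [a] = a"
| "nest f (a # b # cs) = f a (nest f (b # cs))"

text \<open>x(B) = x_k1 |> (x_k2 |> ( ... |> x_kl)) for a block B = {k1 < ... < kl}
(indices 0-based: x_(i+1) = xs ! i).\<close>
definition block_elem :: "('v::zero \<Rightarrow> 'v \<Rightarrow> 'v) \<Rightarrow> 'v list \<Rightarrow> nat set \<Rightarrow> 'v" where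
  "block_elem tri xs B = nest tri (map (\<lambda>k. xs ! k) (sorted_list_of_set B))"

definition X_part :: "('v::zero \<Rightarrow> 'v \<Rightarrow> 'v) \<Rightarrow> 'v list \<Rightarrow> nat set set \<Rightarrow> ('v, 'k::{zero,one}) fa" where
  "X_part tri xs P = fa_word (map (block_elem tri xs) (sorted_key_list_of_set Max P))"

definition partition_sum :: "('v::zero \<Rightarrow> 'v \<Rightarrow> 'v) \<Rightarrow> 'v list \<Rightarrow> ('v, 'k::comm_ring_1) fa" where
  "partition_sum tri xs =
     (\<lambda>w. \<Sum>P\<in>{P. partition_on {..<length xs} P}. X_part tri xs P w)"

end

theory Submission
  imports Defs
begin

text \<open>Since \<open>\<phi>\<close> is multiplicative and fixes the
generators, \<open>\<phi>(x. A) = x \<ast> \<phi>(A)\<close>, and for a primitive \<open>x\<close> the definition of \<open>\<ast>\<close> reduces to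
\<open>x \<ast> B = x B + x \<triangleright> B\<close>; iterating gives \<open>\<phi>(x\<^sub>1. \<dots> .x\<^sub>n) = x\<^sub>1 \<ast> \<dots> \<ast> x\<^sub>n\<close>.  The delicate
point is that \<open>\<ast>\<close>, being defined on representatives in the free algebra, respects the defining
ideal \<open>I\<close> of \<open>U(g)\<close> in its left argument; this holds because the coproduct of every defining
relator lies in \<open>I \<otimes> U + U \<otimes> I\<close>.

On monomials \<open>x \<triangleright> -\<close> acts as a derivation:
\<open>x \<triangleright> (y\<^sub>1 \<dots> y\<^sub>m) = \<Sum>\<^sub>i y\<^sub>1 \<dots> (x \<triangleright> y\<^sub>i) \<dots> y\<^sub>m\<close>.  A partition of \<open>{0, \<dots>, n}\<close> arises from
a unique partition \<open>\<pi>\<close> of \<open>{1, \<dots>, n}\<close> either by adding the block \<open>{0}\<close>, which contributes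
\<open>x X\<^sub>\<pi>\<close>, or by adding \<open>0\<close> to one block \<open>\<pi>\<^sub>i\<close>, which replaces \<open>x(\<pi>\<^sub>i)\<close> by \<open>x \<triangleright> x(\<pi>\<^sub>i)\<close> in
\<open>X\<^sub>\<pi>\<close>; the order of the blocks by their maxima does not change.\<close>

section \<open>The free associative algebra\<close>

lemma fa_mult_assoc:
  fixes A B C :: "('v, 'k::comm_semiring_1) fa"
  shows "fa_mult (fa_mult A B) C = fa_mult A (fa_mult B C)"
proof (rule ext)
  fix w :: "'v list"
  define n where "n = length w"
  define g where "g = (\<lambda>j k. A (take j w) * B (take k (drop j w)) * C (drop k (drop j w)))"
  have "fa_mult (fa_mult A B) C w = (\<Sum>i\<le>n. \<Sum>j\<le>i. g j (i - j))"
    unfolding fa_mult_def n_def g_def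
    by (auto simp: sum_distrib_right min_def drop_take drop_drop intro!: sum.cong)
  also have "\<dots> = (\<Sum>(j,k)\<in>{(j,k). j+k \<le> n}. g j k)"
    by (rule sum.triangle_reindex_eq[symmetric])
  also have "\<dots> = (\<Sum>j\<le>n. \<Sum>k\<le>n-j. g j k)"
  proof -
    have "{(j,k). j+k \<le> n} = Sigma {..n} (\<lambda>j. {..n-j})" by auto
    then show ?thesis by (simp add: sum.Sigma)
  qed
  also have "\<dots> = fa_mult A (fa_mult B C) w"
    unfolding fa_mult_def n_def g_def
    by (auto simp: sum_distrib_left mult.assoc intro!: sum.cong)
  finally show "fa_mult (fa_mult A B) C w = fa_mult A (fa_mult B C) w" .
qed

lemma fa_mult_word_left:
  "fa_mult (fa_word a) q w = (if take (length a) w = a then q (drop (length a) w) else 0)"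
proof -
  have "fa_mult (fa_word a) q w =
      (\<Sum>i\<le>length w. if i = length a \<and> take (length a) w = a then q (drop i w) else 0)"
    unfolding fa_mult_def fa_word_def
  proof (intro sum.cong refl)
    fix i assume i: "i \<in> {..length w}"
    have "take i w = a \<longleftrightarrow> i = length a \<and> take (length a) w = a"
    proof
      assume "take i w = a"
      moreover have "length (take i w) = i" using i by simp
      ultimately show "i = length a \<and> take (length a) w = a" by auto
    qed auto
    then show "(if take i w = a then 1 else 0) * q (drop i w) =
      (if i = length a \<and> take (length a) w = a then q (drop i w) else 0)" by simp
  qed
  also have "\<dots> = (if take (length a) w = a then q (drop (length a) w) else 0)"
  proof (cases "take (length a) w = a")
    case True
    have "length (take (length a) w) = length a" using True by simp
    then have "length a \<le> length w" by (simp add: min_def split: if_split_asm)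
    with True show ?thesis by (simp add: sum.delta')
  qed simp
  finally show ?thesis .
qed

lemma fa_mult_word: "fa_mult (fa_word a) (fa_word b) = (fa_word (a @ b) :: ('v,'k::comm_semiring_1) fa)"
proof (rule ext)
  fix w :: "'v list"
  have "take (length a) w = a \<Longrightarrow> w = a @ drop (length a) w"
    by (metis append_take_drop_id)
  then show "fa_mult (fa_word a) (fa_word b) w = fa_word (a @ b) w"
    by (subst fa_mult_word_left) (auto simp: fa_word_def)
qed

lemma fa_mult_one_left [simp]: "fa_mult fa_one q = q"
  by (rule ext) (simp add: fa_one_def fa_mult_word_left)

lemma fa_mult_one_right [simp]: "fa_mult q fa_one = q"
proof (rule ext)
  fix w :: "'a list"
  have "fa_mult q fa_one w = (\<Sum>i\<le>length w. if i = length w then q (take i w) else 0)"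
    unfolding fa_mult_def fa_one_def fa_word_def by (intro sum.cong) auto
  then show "fa_mult q fa_one w = q w" by (simp add: sum.delta')
qed

lemma fa_mult_zero_left [simp]: "fa_mult (\<lambda>w. 0) q = (\<lambda>w. 0)"
  and fa_mult_zero_right [simp]: "fa_mult q (\<lambda>w. 0) = (\<lambda>w. 0)"
  unfolding fa_mult_def by simp_all

lemma fa_mult_lin_left:
  "fa_mult (\<lambda>w. c * p w + p' w) q = (\<lambda>w. c * fa_mult p q w + fa_mult p' q w)"
  and fa_mult_lin_right:
  "fa_mult q (\<lambda>w. c * p w + p' w) = (\<lambda>w. c * fa_mult q p w + fa_mult q p' w)"
  unfolding fa_mult_def by (auto simp: algebra_simps sum.distrib sum_distrib_left)

lemma fa_mult_sum_left:
  "fa_mult (\<lambda>w. \<Sum>i\<in>A. c i * f i w) q = (\<lambda>w. \<Sum>i\<in>A. c i * fa_mult (f i) q w)"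
  and fa_mult_sum_right:
  "fa_mult q (\<lambda>w. \<Sum>i\<in>A. c i * f i w) = (\<lambda>w. \<Sum>i\<in>A. c i * fa_mult q (f i) w)"
  unfolding fa_mult_def
  by (auto simp: algebra_simps sum_distrib_left sum_distrib_right intro: sum.swap)

lemma fa_mult_sum_right':
  fixes f :: "'a \<Rightarrow> ('v, 'k::comm_ring_1) fa"
  shows "fa_mult q (\<lambda>w. \<Sum>i\<in>A. f i w) = (\<lambda>w. \<Sum>i\<in>A. fa_mult q (f i) w)"
  using fa_mult_sum_right[where q=q and c="\<lambda>_. 1" and f=f and A=A] by simp

lemma fa_fin_word [simp]: "fa_fin (fa_word u)"
  unfolding fa_fin_def fa_word_def by simp

lemma fa_fin_one [simp]: "fa_fin fa_one"
  unfolding fa_one_def by simp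

lemma fa_fin_zero [simp]: "fa_fin (\<lambda>w. 0)"
  unfolding fa_fin_def by simp

lemma fa_fin_lin [simp]:
  "fa_fin p \<Longrightarrow> fa_fin q \<Longrightarrow> fa_fin (\<lambda>w. c * p w + (q w :: 'k::comm_ring_1))"
  unfolding fa_fin_def by (rule finite_subset[of _ "{w. p w \<noteq> 0} \<union> {w. q w \<noteq> 0}"]) auto

lemma fa_fin_plus [simp]: "fa_fin p \<Longrightarrow> fa_fin q \<Longrightarrow> fa_fin (\<lambda>w. p w + (q w :: 'k::comm_ring_1))"
  using fa_fin_lin[of p q 1] by simp

lemma fa_fin_times [simp]: "fa_fin p \<Longrightarrow> fa_fin (\<lambda>w. c * (p w :: 'k::comm_ring_1))"
  using fa_fin_lin[of p "\<lambda>w. 0" c] by simp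

lemma fa_fin_diff [simp]: "fa_fin p \<Longrightarrow> fa_fin q \<Longrightarrow> fa_fin (fa_diff p (q :: ('v,'k::comm_ring_1) fa))"
  unfolding fa_fin_def fa_diff_def
  by (rule finite_subset[of _ "{w. p w \<noteq> 0} \<union> {w. q w \<noteq> 0}"]) auto

lemma fa_fin_scale [simp]: "fa_fin p \<Longrightarrow> fa_fin (fa_scale c (p :: ('v,'k::comm_ring_1) fa))"
  unfolding fa_scale_def by simp

lemma fa_fin_sum:
  "finite A \<Longrightarrow> (\<And>i. i \<in> A \<Longrightarrow> fa_fin (f i)) \<Longrightarrow>
    fa_fin (\<lambda>w. \<Sum>i\<in>A. (f i w :: 'k::comm_ring_1))"
  by (induction A rule: finite_induct) simp_all

lemma fa_fin_mult [simp]: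
  assumes "fa_fin p" "fa_fin q"
  shows "fa_fin (fa_mult p (q :: ('v,'k::comm_semiring_1) fa))"
  unfolding fa_fin_def
proof (rule finite_subset)
  show "{w. fa_mult p q w \<noteq> 0} \<subseteq> (\<lambda>(a,b). a @ b) ` ({w. p w \<noteq> 0} \<times> {w. q w \<noteq> 0})"
  proof
    fix w assume "w \<in> {w. fa_mult p q w \<noteq> 0}"
    then obtain i where "p (take i w) * q (drop i w) \<noteq> 0"
      unfolding fa_mult_def by (auto elim: sum.not_neutral_contains_not_neutral)
    then show "w \<in> (\<lambda>(a,b). a @ b) ` ({w. p w \<noteq> 0} \<times> {w. q w \<noteq> 0})"
      by (intro image_eqI[of _ _ "(take i w, drop i w)"]) auto
  qed
  show "finite ((\<lambda>(a,b). a @ b) ` ({w. p w \<noteq> 0} \<times> {w. q w \<noteq> 0}))"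
    using assms unfolding fa_fin_def by auto
qed

lemma fa_expansion:
  fixes p :: "('v,'k::comm_ring_1) fa"
  assumes "fa_fin p"
  shows "p = (\<lambda>w. \<Sum>u\<in>{u. p u \<noteq> 0}. p u * fa_word u w)"
proof (rule ext)
  fix w
  have "(\<Sum>u\<in>{u. p u \<noteq> 0}. p u * fa_word u w) = (\<Sum>u\<in>{u. p u \<noteq> 0}. if u = w then p u else 0)"
    by (intro sum.cong) (auto simp: fa_word_def)
  also have "\<dots> = p w" using assms unfolding fa_fin_def by (simp add: sum.delta)
  finally show "p w = (\<Sum>u\<in>{u. p u \<noteq> 0}. p u * fa_word u w)" by simp
qed

section \<open>The defining ideal of \<open>U(g)\<close> and the congruence \<open>ueq\<close>\<close>

lemma fa_span_add: "p \<in> fa_span S \<Longrightarrow> q \<in> fa_span S \<Longrightarrow> (\<lambda>w. p w + q w) \<in> fa_span S"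
proof (induction p rule: fa_span.induct)
  case zero then show ?case by simp
next
  case (step s r c)
  have "(\<lambda>w. c * s w + (\<lambda>w. r w + q w) w) \<in> fa_span S"
    by (rule fa_span.step) (use step in auto)
  then show ?case by (simp add: add.assoc)
qed

lemma fa_span_scale: "p \<in> fa_span S \<Longrightarrow> (\<lambda>w. c * p w) \<in> fa_span S"
proof (induction p rule: fa_span.induct)
  case zero then show ?case by (simp add: fa_span.zero)
next
  case (step s r d)
  have "(\<lambda>w. (c * d) * s w + (\<lambda>w. c * r w) w) \<in> fa_span S"
    by (rule fa_span.step) (use step in auto)
  then show ?case by (simp add: algebra_simps)
qed

lemma fa_span_lin: "p \<in> fa_span S \<Longrightarrow> q \<in> fa_span S \<Longrightarrow> (\<lambda>w. c * p w + d * q w) \<in> fa_span S"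
  using fa_span_add[OF fa_span_scale fa_span_scale] by blast

lemma fa_span_sum:
  "finite A \<Longrightarrow> (\<And>i. i \<in> A \<Longrightarrow> f i \<in> fa_span S) \<Longrightarrow>
    (\<lambda>w. \<Sum>i\<in>A. f i w) \<in> fa_span S"
  by (induction A rule: finite_induct) (auto intro: fa_span.zero fa_span_add)

lemma fa_span_fin: "p \<in> fa_span S \<Longrightarrow> (\<And>s. s \<in> S \<Longrightarrow> fa_fin s) \<Longrightarrow> fa_fin p"
  by (induction p rule: fa_span.induct) auto

definition ue_gens ::
    "('k::comm_ring_1 \<Rightarrow> 'v::ab_group_add \<Rightarrow> 'v) \<Rightarrow> ('v \<Rightarrow> 'v \<Rightarrow> 'v) \<Rightarrow> ('v, 'k) fa set" where
  "ue_gens sc br = {fa_mult (fa_mult (fa_word u) r) (fa_word v) | u r v. r \<in> ue_relators sc br}"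

lemma ue_ideal_eq_span: "ue_ideal sc br = fa_span (ue_gens sc br)"
  unfolding ue_ideal_def ue_gens_def ..

lemma ue_gens_fin: "g \<in> ue_gens sc br \<Longrightarrow> fa_fin g"
  unfolding ue_gens_def ue_relators_def by auto

lemma ue_ideal_fin: "p \<in> ue_ideal sc br \<Longrightarrow> fa_fin p"
  unfolding ue_ideal_eq_span using fa_span_fin ue_gens_fin by blast

lemma ue_ideal_zero: "(\<lambda>w. 0) \<in> ue_ideal sc br"
  unfolding ue_ideal_eq_span by (rule fa_span.zero)

lemma ue_ideal_lin:
  "p \<in> ue_ideal sc br \<Longrightarrow> q \<in> ue_ideal sc br \<Longrightarrow> (\<lambda>w. c * p w + d * q w) \<in> ue_ideal sc br"
  unfolding ue_ideal_eq_span by (rule fa_span_lin)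

lemma ue_ideal_scale: "p \<in> ue_ideal sc br \<Longrightarrow> (\<lambda>w. c * p w) \<in> ue_ideal sc br"
  unfolding ue_ideal_eq_span by (rule fa_span_scale)

lemma ue_ideal_sum:
  "finite A \<Longrightarrow> (\<And>i. i \<in> A \<Longrightarrow> f i \<in> ue_ideal sc br) \<Longrightarrow>
    (\<lambda>w. \<Sum>i\<in>A. f i w) \<in> ue_ideal sc br"
  unfolding ue_ideal_eq_span by (rule fa_span_sum)

lemma ue_relator_in_ideal: "r \<in> ue_relators sc br \<Longrightarrow> r \<in> ue_ideal sc br"
proof -
  assume "r \<in> ue_relators sc br"
  then have "r \<in> ue_gens sc br"
    unfolding ue_gens_def by (auto simp flip: fa_one_def intro!: exI[of _ "[]"])
  then show ?thesis
    unfolding ue_ideal_eq_span using fa_span.step[OF _ fa_span.zero, of r _ 1] by simp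
qed

lemma ue_ideal_mult_word_left: "g \<in> ue_ideal sc br \<Longrightarrow> fa_mult (fa_word a) g \<in> ue_ideal sc br"
  unfolding ue_ideal_eq_span
proof (induction g rule: fa_span.induct)
  case zero then show ?case by (simp add: fa_span.zero)
next
  case (step s r c)
  from step(1) obtain u rl v where s: "s = fa_mult (fa_mult (fa_word u) rl) (fa_word v)"
    and rl: "rl \<in> ue_relators sc br"
    unfolding ue_gens_def by blast
  have "fa_mult (fa_word a) s = fa_mult (fa_mult (fa_word (a @ u)) rl) (fa_word v)"
    by (simp add: s fa_mult_assoc flip: fa_mult_word)
  then have "fa_mult (fa_word a) s \<in> ue_gens sc br" using rl unfolding ue_gens_def by blast
  then show ?case
    by (simp add: fa_mult_lin_right) (rule fa_span.step, auto intro: step)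
qed

lemma ue_ideal_mult_word_right: "g \<in> ue_ideal sc br \<Longrightarrow> fa_mult g (fa_word a) \<in> ue_ideal sc br"
  unfolding ue_ideal_eq_span
proof (induction g rule: fa_span.induct)
  case zero then show ?case by (simp add: fa_span.zero)
next
  case (step s r c)
  from step(1) obtain u rl v where s: "s = fa_mult (fa_mult (fa_word u) rl) (fa_word v)"
    and rl: "rl \<in> ue_relators sc br"
    unfolding ue_gens_def by blast
  have "fa_mult s (fa_word a) = fa_mult (fa_mult (fa_word u) rl) (fa_word (v @ a))"
    by (simp add: s fa_mult_assoc flip: fa_mult_word)
  then have "fa_mult s (fa_word a) \<in> ue_gens sc br" using rl unfolding ue_gens_def by blast
  then show ?case
    by (simp add: fa_mult_lin_left) (rule fa_span.step, auto intro: step)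
qed

lemma ue_ideal_mult_left:
  assumes "fa_fin p" "g \<in> ue_ideal sc br"
  shows "fa_mult p g \<in> ue_ideal sc br"
proof -
  have "fa_mult p g = (\<lambda>w. \<Sum>u\<in>{u. p u \<noteq> 0}. p u * fa_mult (fa_word u) g w)"
    by (subst fa_expansion[OF assms(1)]) (rule fa_mult_sum_left)
  also have "\<dots> \<in> ue_ideal sc br"
    using assms by (intro ue_ideal_sum ue_ideal_scale ue_ideal_mult_word_left) (auto simp: fa_fin_def)
  finally show ?thesis .
qed

lemma ue_ideal_mult_right:
  assumes "fa_fin p" "g \<in> ue_ideal sc br"
  shows "fa_mult g p \<in> ue_ideal sc br"
proof -
  have "fa_mult g p = (\<lambda>w. \<Sum>u\<in>{u. p u \<noteq> 0}. p u * fa_mult g (fa_word u) w)"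
    by (subst fa_expansion[OF assms(1)]) (rule fa_mult_sum_right)
  also have "\<dots> \<in> ue_ideal sc br"
    using assms by (intro ue_ideal_sum ue_ideal_scale ue_ideal_mult_word_right) (auto simp: fa_fin_def)
  finally show ?thesis .
qed

lemma ueq_eqI: "p = q \<Longrightarrow> ueq sc br p q"
  unfolding ueq_def fa_diff_def by (simp add: ue_ideal_zero)

lemma ueq_refl [simp]: "ueq sc br p p"
  by (rule ueq_eqI) simp

lemma ueq_sym: "ueq sc br p q \<Longrightarrow> ueq sc br q p"
  unfolding ueq_def fa_diff_def
  using ue_ideal_scale[of "\<lambda>w. p w - q w" sc br "-1"] by simp

lemma ueq_trans [trans]: "ueq sc br p q \<Longrightarrow> ueq sc br q r \<Longrightarrow> ueq sc br p r"
  unfolding ueq_def fa_diff_def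
  using ue_ideal_lin[of "\<lambda>w. p w - q w" sc br "\<lambda>w. q w - r w" 1 1] by simp

lemma ueq_lin: "ueq sc br p p' \<Longrightarrow> ueq sc br q q' \<Longrightarrow>
   ueq sc br (\<lambda>w. c * p w + d * q w) (\<lambda>w. c * p' w + d * q' w)"
  unfolding ueq_def fa_diff_def
  using ue_ideal_lin[of "\<lambda>w. p w - p' w" sc br "\<lambda>w. q w - q' w" c d]
  by (simp add: algebra_simps)

lemma ueq_add_left: "ueq sc br p p' \<Longrightarrow> ueq sc br (\<lambda>w. c * q w + p w) (\<lambda>w. c * q w + p' w)"
  using ueq_lin[OF ueq_refl[of sc br q], of p p' c 1] by simp

lemma ueq_add: "ueq sc br p p' \<Longrightarrow> ueq sc br q q' \<Longrightarrow> ueq sc br (fa_add p q) (fa_add p' q')"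
  using ueq_lin[of sc br p p' q q' 1 1] unfolding fa_add_def by simp

lemma ueq_sum: "finite A \<Longrightarrow> (\<And>i. i \<in> A \<Longrightarrow> ueq sc br (f i) (g i)) \<Longrightarrow>
    ueq sc br (\<lambda>w. \<Sum>i\<in>A. f i w) (\<lambda>w. \<Sum>i\<in>A. g i w)"
  unfolding ueq_def fa_diff_def
  using ue_ideal_sum[of A "\<lambda>i w. f i w - g i w" sc br] by (simp add: sum_subtractf)

lemma ueq_zero_if_double: "ueq sc br X (\<lambda>w. 1 * X w + X w) \<Longrightarrow> ueq sc br X (\<lambda>w. 0)"
  unfolding ueq_def fa_diff_def
  using ue_ideal_scale[of "\<lambda>w. X w - (1 * X w + X w)" sc br "-1"] by simp

lemma ueq_mult:
  assumes "fa_fin p" "fa_fin p'" "fa_fin q" "fa_fin q'" "ueq sc br p p'" "ueq sc br q q'"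
  shows "ueq sc br (fa_mult p q) (fa_mult p' q')"
proof -
  have left: "fa_mult (fa_diff p p') q \<in> ue_ideal sc br"
    using assms by (intro ue_ideal_mult_right) (auto simp: ueq_def)
  have right: "fa_mult p' (fa_diff q q') \<in> ue_ideal sc br"
    using assms by (intro ue_ideal_mult_left) (auto simp: ueq_def)
  have "fa_diff (fa_mult p q) (fa_mult p' q') =
     (\<lambda>w. 1 * fa_mult (fa_diff p p') q w + 1 * fa_mult p' (fa_diff q q') w)"
    unfolding fa_diff_def fa_mult_def
    by (auto simp: algebra_simps sum_subtractf[symmetric] sum.distrib[symmetric] intro!: sum.cong)
  then show ?thesis unfolding ueq_def using ue_ideal_lin[OF left right, of 1 1] by simp
qed

lemma ueq_mult_left: "fa_fin p \<Longrightarrow> fa_fin q \<Longrightarrow> fa_fin q' \<Longrightarrow> ueq sc br q q' \<Longrightarrow>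
   ueq sc br (fa_mult p q) (fa_mult p q')"
  by (rule ueq_mult) auto

lemma ueq_mult_right: "fa_fin p \<Longrightarrow> fa_fin p' \<Longrightarrow> fa_fin q \<Longrightarrow> ueq sc br p p' \<Longrightarrow>
   ueq sc br (fa_mult p q) (fa_mult p' q)"
  by (rule ueq_mult) auto

section \<open>The extended post-Lie product on representatives\<close>

locale extended_post_lie =
  fixes sc :: "'k::comm_ring_1 \<Rightarrow> 'v::ab_group_add \<Rightarrow> 'v" and br tri :: "'v \<Rightarrow> 'v \<Rightarrow> 'v"
    and T :: "('v, 'k) fa \<Rightarrow> ('v, 'k) fa \<Rightarrow> ('v, 'k) fa"
  assumes ext: "ext_post_lie sc br tri T"
begin

lemma T_fin: "fa_fin p \<Longrightarrow> fa_fin q \<Longrightarrow> fa_fin (T p q)"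
  using ext unfolding ext_post_lie_def by (elim conjE) simp

lemma T_cong: "fa_fin p \<Longrightarrow> fa_fin p' \<Longrightarrow> fa_fin q \<Longrightarrow> fa_fin q' \<Longrightarrow>
    ueq sc br p p' \<Longrightarrow> ueq sc br q q' \<Longrightarrow> ueq sc br (T p q) (T p' q')"
  using ext unfolding ext_post_lie_def by (elim conjE) simp

lemma T_cong_left: "fa_fin p \<Longrightarrow> fa_fin p' \<Longrightarrow> fa_fin q \<Longrightarrow>
    ueq sc br p p' \<Longrightarrow> ueq sc br (T p q) (T p' q)"
  by (rule T_cong) simp_all

lemma T_cong_right: "fa_fin p \<Longrightarrow> fa_fin q \<Longrightarrow> fa_fin q' \<Longrightarrow>
    ueq sc br q q' \<Longrightarrow> ueq sc br (T p q) (T p q')"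
  by (rule T_cong) simp_all

lemma T_lin_left: "fa_fin p \<Longrightarrow> fa_fin p' \<Longrightarrow> fa_fin q \<Longrightarrow>
    ueq sc br (T (\<lambda>w. c * p w + p' w) q) (\<lambda>w. c * T p q w + T p' q w)"
  using ext unfolding ext_post_lie_def fa_add_def fa_scale_def by (elim conjE) simp

lemma T_lin_right: "fa_fin p \<Longrightarrow> fa_fin q \<Longrightarrow> fa_fin q' \<Longrightarrow>
    ueq sc br (T p (\<lambda>w. c * q w + q' w)) (\<lambda>w. c * T p q w + T p q' w)"
  using ext unfolding ext_post_lie_def fa_add_def fa_scale_def by (elim conjE) simp

lemma T_letters: "ueq sc br (T (fa_word [x]) (fa_word [y])) (fa_word [tri x y])"
  using ext unfolding ext_post_lie_def by (elim conjE) simp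

lemma T_one_left: "fa_fin p \<Longrightarrow> ueq sc br (T fa_one p) p"
  using ext unfolding ext_post_lie_def by (elim conjE) simp

lemma T_one_right: "fa_fin p \<Longrightarrow> ueq sc br (T p fa_one) (fa_scale (fa_eps p) fa_one)"
  using ext unfolding ext_post_lie_def by (elim conjE) simp

lemma T_word_mult: "fa_fin p \<Longrightarrow> fa_fin q \<Longrightarrow>
    ueq sc br (T (fa_word u) (fa_mult p q))
      (\<lambda>w. \<Sum>S\<in>Pow {..<length u}. fa_mult (T (fa_word (nths u S)) p) (T (fa_word (nths u (- S))) q) w)"
  using ext unfolding ext_post_lie_def by (elim conjE) simp

lemma T_zero_right: "fa_fin p \<Longrightarrow> ueq sc br (T p (\<lambda>w. 0)) (\<lambda>w. 0)"
  using T_lin_right[of p "\<lambda>w. 0" "\<lambda>w. 0" 1] by (intro ueq_zero_if_double) simp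

lemma T_sum_right:
  assumes "finite A" "\<And>i. i \<in> A \<Longrightarrow> fa_fin (f i)" "fa_fin p"
  shows "ueq sc br (T p (\<lambda>w. \<Sum>i\<in>A. f i w)) (\<lambda>w. \<Sum>i\<in>A. T p (f i) w)"
  using assms(1,2)
proof (induction A rule: finite_induct)
  case empty then show ?case using T_zero_right[OF assms(3)] by simp
next
  case (insert a A)
  have IH: "ueq sc br (T p (\<lambda>w. \<Sum>i\<in>A. f i w)) (\<lambda>w. \<Sum>i\<in>A. T p (f i) w)"
    by (rule insert.IH) (simp add: insert.prems)
  have "ueq sc br (T p (\<lambda>w. 1 * f a w + (\<Sum>i\<in>A. f i w)))
     (\<lambda>w. 1 * T p (f a) w + T p (\<lambda>w. \<Sum>i\<in>A. f i w) w)"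
    by (intro T_lin_right assms(3) fa_fin_sum) (simp_all add: insert.prems insert(1))
  also have "ueq sc br \<dots> (\<lambda>w. 1 * T p (f a) w + 1 * (\<Sum>i\<in>A. T p (f i) w))"
    using ueq_lin[OF ueq_refl[of sc br "T p (f a)"] IH, of 1 1] by simp
  finally show ?case using insert(1,2) by simp
qed

end

section \<open>The product \<open>\<ast>\<close> on representatives\<close>

definition word_star :: "(('v, 'k::comm_ring_1) fa \<Rightarrow> ('v, 'k) fa \<Rightarrow> ('v, 'k) fa) \<Rightarrow>
    'v list \<Rightarrow> ('v, 'k) fa \<Rightarrow> ('v, 'k) fa" where
  "word_star T u q = (\<lambda>w. \<Sum>S\<in>Pow {..<length u}.
     fa_mult (fa_word (nths u S)) (T (fa_word (nths u (- S))) q) w)"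

lemma fa_star_eq_sum_superset:
  assumes "finite F" "{u. p u \<noteq> 0} \<subseteq> F"
  shows "fa_star T p q = (\<lambda>w. \<Sum>u\<in>F. p u * word_star T u q w)"
  unfolding fa_star_def word_star_def
  by (rule ext, rule sum.mono_neutral_left) (use assms in auto)

lemma fa_star_eq_sum:
  "fa_fin p \<Longrightarrow> fa_star T p q = (\<lambda>w. \<Sum>u\<in>{u. p u \<noteq> 0}. p u * word_star T u q w)"
  by (rule fa_star_eq_sum_superset) (auto simp: fa_fin_def)

lemma fa_star_word: "fa_star T (fa_word u) q = word_star T u q"
proof -
  have "fa_star T (fa_word u) q = (\<lambda>w. \<Sum>u'\<in>{u}. fa_word u u' * word_star T u' q w)"
    by (rule fa_star_eq_sum_superset) (auto simp: fa_word_def)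
  then show ?thesis by (simp add: fa_word_def)
qed

lemma fa_star_lin_left:
  assumes "fa_fin p" "fa_fin p'"
  shows "fa_star T (\<lambda>w. c * p w + p' w) q = (\<lambda>w. c * fa_star T p q w + fa_star T p' q w)"
proof -
  let ?F = "{u. p u \<noteq> 0} \<union> {u. p' u \<noteq> 0}"
  have fin: "finite ?F" using assms by (simp add: fa_fin_def)
  have "fa_star T (\<lambda>w. c * p w + p' w) q = (\<lambda>w. \<Sum>u\<in>?F. (c * p u + p' u) * word_star T u q w)"
    by (rule fa_star_eq_sum_superset[OF fin]) auto
  moreover have "fa_star T p q = (\<lambda>w. \<Sum>u\<in>?F. p u * word_star T u q w)"
    by (rule fa_star_eq_sum_superset[OF fin]) auto
  moreover have "fa_star T p' q = (\<lambda>w. \<Sum>u\<in>?F. p' u * word_star T u q w)"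
    by (rule fa_star_eq_sum_superset[OF fin]) auto
  ultimately show ?thesis
    by (simp add: algebra_simps sum.distrib sum_distrib_left)
qed

lemma fa_star_zero_left: "fa_star T (\<lambda>w. 0) q = (\<lambda>w. 0)"
  unfolding fa_star_def by simp

lemma Pow_lessThan_1: "Pow {..<Suc 0} = {{}, {0}}"
  by (auto simp: lessThan_Suc)

lemma Pow_lessThan_2: "Pow {..<Suc (Suc 0)} = {{}, {0}, {Suc 0}, {0, Suc 0}}"
  by (auto simp: lessThan_Suc Pow_insert)

text \<open>For a generator \<open>x\<close> the coproduct is \<open>x \<otimes> \<one> + \<one> \<otimes> x\<close>.\<close>

lemma fa_star_letter:
  "fa_star T (fa_word [x]) q = (\<lambda>w. T (fa_word [x]) q w + fa_mult (fa_word [x]) (T fa_one q) w)"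
  unfolding fa_star_word word_star_def by (simp add: Pow_lessThan_1 flip: fa_one_def)

lemma nths_cong: "(\<And>i. i < length xs \<Longrightarrow> i \<in> A \<longleftrightarrow> i \<in> B) \<Longrightarrow> nths xs A = nths xs B"
proof (induction xs arbitrary: A B)
  case Nil then show ?case by simp
next
  case (Cons x xs)
  have "nths xs {j. Suc j \<in> A} = nths xs {j. Suc j \<in> B}"
    using Cons.prems by (intro Cons.IH) auto
  moreover have "0 \<in> A \<longleftrightarrow> 0 \<in> B" using Cons.prems by simp
  ultimately show ?case by (simp add: nths_Cons)
qed

lemma sum_Pow_append:
  fixes f :: "'a list \<Rightarrow> 'a list \<Rightarrow> 'b::comm_monoid_add"
  shows "(\<Sum>S\<in>Pow {..<length (a @ b)}. f (nths (a @ b) S) (nths (a @ b) (- S))) =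
    (\<Sum>A\<in>Pow {..<length a}. \<Sum>C\<in>Pow {..<length b}. f (nths a A @ nths b C) (nths a (- A) @ nths b (- C)))"
proof -
  let ?h = "\<lambda>(A, C). f (nths a A @ nths b C) (nths a (- A) @ nths b (- C))"
  have "(\<Sum>S\<in>Pow {..<length (a @ b)}. f (nths (a @ b) S) (nths (a @ b) (- S))) =
      (\<Sum>AC\<in>Pow {..<length a} \<times> Pow {..<length b}. ?h AC)"
  proof (rule sum.reindex_bij_witness[where i = "\<lambda>(A, C). A \<union> (\<lambda>j. j + length a) ` C"
        and j = "\<lambda>S. (S \<inter> {..<length a}, {j. j + length a \<in> S})"])
    fix S assume S: "S \<in> Pow {..<length (a @ b)}"
    have "x \<in> S \<Longrightarrow> x \<ge> length a \<Longrightarrow> x \<in> (\<lambda>j. j + length a) ` {j. j + length a \<in> S}" for x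
      by (rule image_eqI[of _ _ "x - length a"]) auto
    then show "(\<lambda>(A, C). A \<union> (\<lambda>j. j + length a) ` C) (S \<inter> {..<length a}, {j. j + length a \<in> S}) = S"
      using not_less by fastforce
    show "(S \<inter> {..<length a}, {j. j + length a \<in> S}) \<in> Pow {..<length a} \<times> Pow {..<length b}"
      using S by auto
    have "nths a S = nths a (S \<inter> {..<length a})" "nths a (- S) = nths a (- (S \<inter> {..<length a}))"
      by (rule nths_cong; auto)+
    moreover have "- {j. j + length a \<in> S} = {j. j + length a \<notin> S}" by auto
    ultimately show "?h (S \<inter> {..<length a}, {j. j + length a \<in> S}) = f (nths (a @ b) S) (nths (a @ b) (- S))"
      by (simp add: nths_append)
  next
    fix AC assume "AC \<in> Pow {..<length a} \<times> Pow {..<length b}"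
    then obtain A C where AC: "AC = (A, C)" "A \<subseteq> {..<length a}" "C \<subseteq> {..<length b}" by auto
    then show "(\<lambda>S. (S \<inter> {..<length a}, {j. j + length a \<in> S})) ((\<lambda>(A, C). A \<union> (\<lambda>j. j + length a) ` C) AC) = AC"
      "(\<lambda>(A, C). A \<union> (\<lambda>j. j + length a) ` C) AC \<in> Pow {..<length (a @ b)}"
      by auto
  qed
  also have "\<dots> = (\<Sum>A\<in>Pow {..<length a}. \<Sum>C\<in>Pow {..<length b}. ?h (A, C))"
    by (simp add: sum.cartesian_product)
  finally show ?thesis by simp
qed

text \<open>Splitting the coproduct of \<open>u m v\<close> into those of \<open>u\<close>, \<open>m\<close> and \<open>v\<close>: \<open>middle_term T q a a' b b' P Q\<close>
stands for \<open>(a P b) ((a' Q b') \<triangleright> q)\<close>, where \<open>a \<otimes> a'\<close> and \<open>b \<otimes> b'\<close> are fixed coproduct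
terms of \<open>u\<close> and \<open>v\<close>.\<close>

definition middle_term :: "(('v, 'k::comm_ring_1) fa \<Rightarrow> ('v, 'k) fa \<Rightarrow> ('v, 'k) fa) \<Rightarrow> ('v, 'k) fa \<Rightarrow>
    'v list \<Rightarrow> 'v list \<Rightarrow> 'v list \<Rightarrow> 'v list \<Rightarrow> ('v, 'k) fa \<Rightarrow> ('v, 'k) fa \<Rightarrow> ('v, 'k) fa" where
  "middle_term T q a a' b b' P Q = fa_mult (fa_mult (fa_word a) (fa_mult P (fa_word b)))
      (T (fa_mult (fa_word a') (fa_mult Q (fa_word b'))) q)"

definition middle_star :: "(('v, 'k::comm_ring_1) fa \<Rightarrow> ('v, 'k) fa \<Rightarrow> ('v, 'k) fa) \<Rightarrow> ('v, 'k) fa \<Rightarrow>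
    'v list \<Rightarrow> 'v list \<Rightarrow> 'v list \<Rightarrow> 'v list \<Rightarrow> 'v list \<Rightarrow> ('v, 'k) fa" where
  "middle_star T q a a' b b' m = (\<lambda>w. \<Sum>M\<in>Pow {..<length m}.
      middle_term T q a a' b b' (fa_word (nths m M)) (fa_word (nths m (- M))) w)"

definition primitive_term :: "(('v, 'k::comm_ring_1) fa \<Rightarrow> ('v, 'k) fa \<Rightarrow> ('v, 'k) fa) \<Rightarrow> ('v, 'k) fa \<Rightarrow>
    'v list \<Rightarrow> 'v list \<Rightarrow> 'v list \<Rightarrow> 'v list \<Rightarrow> ('v, 'k) fa \<Rightarrow> ('v, 'k) fa" where
  "primitive_term T q a a' b b' P =
     (\<lambda>w. middle_term T q a a' b b' fa_one P w + middle_term T q a a' b b' P fa_one w)"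

lemma word_star_append3:
  "word_star T (u @ m @ v) q = (\<lambda>w. \<Sum>A\<in>Pow {..<length u}. \<Sum>C\<in>Pow {..<length v}.
      middle_star T q (nths u A) (nths u (- A)) (nths v C) (nths v (- C)) m w)"
proof (rule ext)
  fix w
  let ?g = "\<lambda>s t. fa_mult (fa_word s) (T (fa_word t) q) w"
  have "word_star T (u @ m @ v) q w =
      (\<Sum>S\<in>Pow {..<length (u @ (m @ v))}. ?g (nths (u @ (m @ v)) S) (nths (u @ (m @ v)) (- S)))"
    unfolding word_star_def by simp
  also have "\<dots> = (\<Sum>A\<in>Pow {..<length u}. \<Sum>S\<in>Pow {..<length (m @ v)}.
       ?g (nths u A @ nths (m @ v) S) (nths u (- A) @ nths (m @ v) (- S)))"
    by (rule sum_Pow_append)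
  also have "\<dots> = (\<Sum>A\<in>Pow {..<length u}. \<Sum>M\<in>Pow {..<length m}. \<Sum>C\<in>Pow {..<length v}.
       ?g (nths u A @ nths m M @ nths v C) (nths u (- A) @ nths m (- M) @ nths v (- C)))"
    by (rule sum.cong[OF refl], rule sum_Pow_append[where f = "\<lambda>s t. ?g (nths u _ @ s) (nths u (- _) @ t)"])
  also have "\<dots> = (\<Sum>A\<in>Pow {..<length u}. \<Sum>C\<in>Pow {..<length v}. \<Sum>M\<in>Pow {..<length m}.
       ?g (nths u A @ nths m M @ nths v C) (nths u (- A) @ nths m (- M) @ nths v (- C)))"
    by (rule sum.cong[OF refl], rule sum.swap)
  also have "\<dots> = (\<Sum>A\<in>Pow {..<length u}. \<Sum>C\<in>Pow {..<length v}.
      middle_star T q (nths u A) (nths u (- A)) (nths v C) (nths v (- C)) m w)"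
    unfolding middle_star_def middle_term_def by (simp add: fa_mult_word)
  finally show "word_star T (u @ m @ v) q w = (\<Sum>A\<in>Pow {..<length u}. \<Sum>C\<in>Pow {..<length v}.
      middle_star T q (nths u A) (nths u (- A)) (nths v C) (nths v (- C)) m w)" .
qed

lemma middle_star_letter: "middle_star T q a a' b b' [z] = primitive_term T q a a' b b' (fa_word [z])"
  unfolding middle_star_def primitive_term_def by (auto simp: Pow_lessThan_1 fa_one_def)

lemma middle_star_pair:
  "middle_star T q a a' b b' [x, y] = (\<lambda>w. primitive_term T q a a' b b' (fa_word [x, y]) w
     + middle_term T q a a' b b' (fa_word [x]) (fa_word [y]) w
     + middle_term T q a a' b b' (fa_word [y]) (fa_word [x]) w)"
  unfolding middle_star_def primitive_term_def
  by (auto simp: Pow_lessThan_2 fa_one_def nths_Cons algebra_simps)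

text \<open>Each defining relator is a combination of at most three words on which \<open>middle_star\<close>
agrees with \<open>primitive_term\<close>: for the Lie relator the mixed terms of \<open>[x, y]\<close> and \<open>[y, x]\<close> cancel.\<close>

lemma ue_relator_words:
  assumes "r \<in> ue_relators sc br"
  obtains c1 c2 c3 m1 m2 m3 where
    "r = (\<lambda>w. c1 * fa_word m1 w + (c2 * fa_word m2 w + (c3 * fa_word m3 w + 0)))"
    "\<And>T q a a' b b'. (\<lambda>w. c1 * middle_star T q a a' b b' m1 w + c2 * middle_star T q a a' b b' m2 w
        + c3 * middle_star T q a a' b b' m3 w) =
      (\<lambda>w. c1 * primitive_term T q a a' b b' (fa_word m1) w + c2 * primitive_term T q a a' b b' (fa_word m2) w
        + c3 * primitive_term T q a a' b b' (fa_word m3) w)"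
proof -
  consider (add) x y where "r = fa_diff (fa_diff (fa_word [x + y]) (fa_word [x])) (fa_word [y])"
    | (scale) c x where "r = fa_diff (fa_word [sc c x]) (fa_scale c (fa_word [x]))"
    | (lie) x y where "r = fa_diff (fa_diff (fa_word [x, y]) (fa_word [y, x])) (fa_word [br x y])"
    using assms unfolding ue_relators_def by blast
  then show ?thesis
  proof cases
    case add
    show ?thesis
      by (rule that[of 1 "[x + y]" "-1" "[x]" "-1" "[y]"])
        (simp_all add: add fa_diff_def fun_eq_iff middle_star_letter)
  next
    case scale
    show ?thesis
      by (rule that[of 1 "[sc c x]" "-c" "[x]" 0 "[x]"])
        (simp_all add: scale fa_diff_def fa_scale_def fun_eq_iff middle_star_letter)
  next
    case lie
    show ?thesis
      by (rule that[of 1 "[x, y]" "-1" "[y, x]" "-1" "[br x y]"])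
        (simp_all add: lie fa_diff_def fun_eq_iff middle_star_letter middle_star_pair algebra_simps)
  qed
qed

context extended_post_lie
begin

lemma middle_term_cong_left:
  "fa_fin q \<Longrightarrow> fa_fin P \<Longrightarrow> fa_fin P' \<Longrightarrow> fa_fin Q \<Longrightarrow> ueq sc br P P' \<Longrightarrow>
    ueq sc br (middle_term T q a a' b b' P Q) (middle_term T q a a' b b' P' Q)"
  unfolding middle_term_def by (intro ueq_mult_right ueq_mult_left) (simp_all add: T_fin)

lemma middle_term_cong_right:
  "fa_fin q \<Longrightarrow> fa_fin P \<Longrightarrow> fa_fin Q \<Longrightarrow> fa_fin Q' \<Longrightarrow> ueq sc br Q Q' \<Longrightarrow>
    ueq sc br (middle_term T q a a' b b' P Q) (middle_term T q a a' b b' P Q')"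
  unfolding middle_term_def by (intro ueq_mult_left T_cong_left ueq_mult_right) (simp_all add: T_fin)

lemma middle_term_lin_left:
  "middle_term T q a a' b b' (\<lambda>w. c * P1 w + P2 w) Q =
     (\<lambda>w. c * middle_term T q a a' b b' P1 Q w + middle_term T q a a' b b' P2 Q w)"
  unfolding middle_term_def by (simp add: fa_mult_lin_left fa_mult_lin_right)

lemma middle_term_lin_right:
  assumes "fa_fin q" "fa_fin P" "fa_fin Q1" "fa_fin Q2"
  shows "ueq sc br (middle_term T q a a' b b' P (\<lambda>w. c * Q1 w + Q2 w))
    (\<lambda>w. c * middle_term T q a a' b b' P Q1 w + middle_term T q a a' b b' P Q2 w)"
proof -
  define L where "L = fa_mult (fa_word a) (fa_mult P (fa_word b))"
  define X1 where "X1 = fa_mult (fa_word a') (fa_mult Q1 (fa_word b'))"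
  define X2 where "X2 = fa_mult (fa_word a') (fa_mult Q2 (fa_word b'))"
  have fin: "fa_fin L" "fa_fin X1" "fa_fin X2" using assms by (simp_all add: X1_def X2_def L_def)
  have "ueq sc br (fa_mult L (T (\<lambda>w. c * X1 w + X2 w) q)) (fa_mult L (\<lambda>w. c * T X1 q w + T X2 q w))"
    using fin assms(1) by (intro ueq_mult_left T_lin_left) (simp_all add: T_fin)
  moreover have "middle_term T q a a' b b' P (\<lambda>w. c * Q1 w + Q2 w) = fa_mult L (T (\<lambda>w. c * X1 w + X2 w) q)"
    unfolding middle_term_def X1_def X2_def L_def by (simp add: fa_mult_lin_left fa_mult_lin_right)
  moreover have "fa_mult L (\<lambda>w. c * T X1 q w + T X2 q w) =
      (\<lambda>w. c * middle_term T q a a' b b' P Q1 w + middle_term T q a a' b b' P Q2 w)"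
    unfolding middle_term_def X1_def X2_def L_def by (simp add: fa_mult_lin_right)
  ultimately show ?thesis by simp
qed

lemma primitive_term_cong:
  assumes "fa_fin q" "fa_fin P" "fa_fin P'" "ueq sc br P P'"
  shows "ueq sc br (primitive_term T q a a' b b' P) (primitive_term T q a a' b b' P')"
proof -
  have "ueq sc br (\<lambda>w. 1 * middle_term T q a a' b b' fa_one P w + 1 * middle_term T q a a' b b' P fa_one w)
      (\<lambda>w. 1 * middle_term T q a a' b b' fa_one P' w + 1 * middle_term T q a a' b b' P' fa_one w)"
    by (intro ueq_lin middle_term_cong_right middle_term_cong_left) (simp_all add: assms)
  then show ?thesis by (simp add: primitive_term_def)
qed

lemma primitive_term_lin:
  assumes "fa_fin q" "fa_fin P1" "fa_fin P2"
  shows "ueq sc br (primitive_term T q a a' b b' (\<lambda>w. c * P1 w + P2 w))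
    (\<lambda>w. c * primitive_term T q a a' b b' P1 w + primitive_term T q a a' b b' P2 w)"
proof -
  let ?H = "middle_term T q a a' b b'"
  have "ueq sc br (\<lambda>w. 1 * ?H fa_one (\<lambda>w. c * P1 w + P2 w) w + 1 * ?H (\<lambda>w. c * P1 w + P2 w) fa_one w)
      (\<lambda>w. 1 * (\<lambda>w. c * ?H fa_one P1 w + ?H fa_one P2 w) w + 1 * (\<lambda>w. c * ?H P1 fa_one w + ?H P2 fa_one w) w)"
    by (rule ueq_lin[OF middle_term_lin_right ueq_eqI]) (simp_all add: assms middle_term_lin_left)
  then show ?thesis unfolding primitive_term_def by (simp add: algebra_simps)
qed

lemma primitive_term_zero: "fa_fin q \<Longrightarrow> ueq sc br (primitive_term T q a a' b b' (\<lambda>w. 0)) (\<lambda>w. 0)"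
  using primitive_term_lin[of q "\<lambda>w. 0" "\<lambda>w. 0" a a' b b' 1] by (intro ueq_zero_if_double) simp

lemma primitive_term_ideal:
  assumes "fa_fin q" "r \<in> ue_ideal sc br"
  shows "ueq sc br (primitive_term T q a a' b b' r) (\<lambda>w. 0)"
proof -
  have "ueq sc br (primitive_term T q a a' b b' r) (primitive_term T q a a' b b' (\<lambda>w. 0))"
    using assms by (intro primitive_term_cong) (simp_all add: ue_ideal_fin ueq_def fa_diff_def)
  also have "ueq sc br \<dots> (\<lambda>w. 0)"
    using assms(1) by (rule primitive_term_zero)
  finally show ?thesis .
qed

lemma primitive_term_lin3:
  assumes "fa_fin q"
  shows "ueq sc br (primitive_term T q a a' b b'
      (\<lambda>w. c1 * fa_word m1 w + (c2 * fa_word m2 w + (c3 * fa_word m3 w + 0))))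
    (\<lambda>w. c1 * primitive_term T q a a' b b' (fa_word m1) w + (c2 * primitive_term T q a a' b b' (fa_word m2) w
      + (c3 * primitive_term T q a a' b b' (fa_word m3) w + 0)))"
proof -
  let ?P = "primitive_term T q a a' b b'"
  have "ueq sc br (?P (\<lambda>w. c1 * fa_word m1 w + (c2 * fa_word m2 w + (c3 * fa_word m3 w + 0))))
      (\<lambda>w. c1 * ?P (fa_word m1) w + ?P (\<lambda>w. c2 * fa_word m2 w + (c3 * fa_word m3 w + 0)) w)"
    using assms by (rule primitive_term_lin) simp_all
  also have "ueq sc br \<dots> (\<lambda>w. c1 * ?P (fa_word m1) w + (c2 * ?P (fa_word m2) w
      + ?P (\<lambda>w. c3 * fa_word m3 w + 0) w))"
    using assms by (intro ueq_add_left primitive_term_lin) simp_all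
  also have "ueq sc br \<dots> (\<lambda>w. c1 * ?P (fa_word m1) w + (c2 * ?P (fa_word m2) w
      + (c3 * ?P (fa_word m3) w + ?P (\<lambda>w. 0) w)))"
    using assms by (intro ueq_add_left primitive_term_lin) simp_all
  also have "ueq sc br \<dots> (\<lambda>w. c1 * ?P (fa_word m1) w + (c2 * ?P (fa_word m2) w
      + (c3 * ?P (fa_word m3) w + 0)))"
    using assms by (intro ueq_add_left primitive_term_zero)
  finally show ?thesis .
qed

lemma middle_star_relator_in_ideal:
  assumes "r \<in> ue_relators sc br" "fa_fin q"
  obtains c1 c2 c3 m1 m2 m3 where
    "r = (\<lambda>w. c1 * fa_word m1 w + (c2 * fa_word m2 w + (c3 * fa_word m3 w + 0)))"
    "\<And>a a' b b'. (\<lambda>w. c1 * middle_star T q a a' b b' m1 w + c2 * middle_star T q a a' b b' m2 w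
        + c3 * middle_star T q a a' b b' m3 w) \<in> ue_ideal sc br"
proof -
  obtain c1 c2 c3 m1 m2 m3 where
    r: "r = (\<lambda>w. c1 * fa_word m1 w + (c2 * fa_word m2 w + (c3 * fa_word m3 w + 0)))" and
    sums: "\<And>T q a a' b b'. (\<lambda>w. c1 * middle_star T q a a' b b' m1 w
        + c2 * middle_star T q a a' b b' m2 w + c3 * middle_star T q a a' b b' m3 w) =
      (\<lambda>w. c1 * primitive_term T q a a' b b' (fa_word m1) w
        + c2 * primitive_term T q a a' b b' (fa_word m2) w + c3 * primitive_term T q a a' b b' (fa_word m3) w)"
    by (rule ue_relator_words[OF assms(1)]) (rule that; assumption)
  show thesis
  proof (rule that[OF r])
    fix a a' b b'
    have "ueq sc br (primitive_term T q a a' b b' r) (\<lambda>w. 0)"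
      using assms by (intro primitive_term_ideal ue_relator_in_ideal)
    then have "ueq sc br (primitive_term T q a a' b b'
        (\<lambda>w. c1 * fa_word m1 w + (c2 * fa_word m2 w + (c3 * fa_word m3 w + 0)))) (\<lambda>w. 0)"
      unfolding r .
    with ueq_sym[OF primitive_term_lin3[OF assms(2)]]
    have "ueq sc br (\<lambda>w. c1 * primitive_term T q a a' b b' (fa_word m1) w
        + (c2 * primitive_term T q a a' b b' (fa_word m2) w
        + (c3 * primitive_term T q a a' b b' (fa_word m3) w + 0))) (\<lambda>w. 0)"
      by (rule ueq_trans)
    then show "(\<lambda>w. c1 * middle_star T q a a' b b' m1 w + c2 * middle_star T q a a' b b' m2 w
        + c3 * middle_star T q a a' b b' m3 w) \<in> ue_ideal sc br"
      unfolding sums by (simp add: ueq_def fa_diff_def add.assoc)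
  qed
qed

text \<open>The coproduct of a generator \<open>u r v\<close> of the ideal is expanded by \<open>word_star_append3\<close>;
for each fixed choice of coproduct terms of \<open>u\<close> and \<open>v\<close> what remains is the combination of
\<open>middle_star\<close> over the relator \<open>r\<close>, which lies in the ideal.\<close>

lemma fa_star_gen_in_ideal:
  assumes "g \<in> ue_gens sc br" "fa_fin q"
  shows "fa_star T g q \<in> ue_ideal sc br"
proof -
  obtain u r v where g: "g = fa_mult (fa_mult (fa_word u) r) (fa_word v)" and r: "r \<in> ue_relators sc br"
    using assms(1) unfolding ue_gens_def by blast
  obtain c1 c2 c3 m1 m2 m3 where
    r_eq: "r = (\<lambda>w. c1 * fa_word m1 w + (c2 * fa_word m2 w + (c3 * fa_word m3 w + 0)))" and
    in_ideal: "\<And>a a' b b'. (\<lambda>w. c1 * middle_star T q a a' b b' m1 w + c2 * middle_star T q a a' b b' m2 w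
        + c3 * middle_star T q a a' b b' m3 w) \<in> ue_ideal sc br"
    by (rule middle_star_relator_in_ideal[OF r assms(2)]) (rule that; assumption)
  have "g = (\<lambda>w. c1 * fa_word (u @ m1 @ v) w + (\<lambda>w. c2 * fa_word (u @ m2 @ v) w
      + (\<lambda>w. c3 * fa_word (u @ m3 @ v) w + (\<lambda>w. 0) w) w) w)"
  proof -
    have "g = fa_mult (fa_mult (fa_word u) (\<lambda>w. c1 * fa_word m1 w + (\<lambda>w. c2 * fa_word m2 w
        + (\<lambda>w. c3 * fa_word m3 w + (\<lambda>w. 0) w) w) w)) (fa_word v)"
      unfolding g r_eq by simp
    then show ?thesis
      by (simp only: fa_mult_lin_left fa_mult_lin_right fa_mult_zero_left fa_mult_zero_right
          fa_mult_word fa_mult_assoc append_assoc)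
  qed
  then have "fa_star T g q = (\<lambda>w. c1 * word_star T (u @ m1 @ v) q w + (c2 * word_star T (u @ m2 @ v) q w
      + (c3 * word_star T (u @ m3 @ v) q w + 0)))"
    by (simp only: fa_star_lin_left fa_fin_lin fa_fin_word fa_fin_zero fa_star_zero_left fa_star_word)
  also have "\<dots> = (\<lambda>w. \<Sum>A\<in>Pow {..<length u}. \<Sum>C\<in>Pow {..<length v}.
      (\<lambda>w. c1 * middle_star T q (nths u A) (nths u (- A)) (nths v C) (nths v (- C)) m1 w +
           c2 * middle_star T q (nths u A) (nths u (- A)) (nths v C) (nths v (- C)) m2 w +
           c3 * middle_star T q (nths u A) (nths u (- A)) (nths v C) (nths v (- C)) m3 w) w)"
    by (simp add: word_star_append3 sum_distrib_left sum.distrib algebra_simps)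
  also have "\<dots> \<in> ue_ideal sc br"
    by (intro ue_ideal_sum in_ideal) auto
  finally show ?thesis .
qed

lemma fa_star_ideal_left:
  assumes "p \<in> ue_ideal sc br" "fa_fin q"
  shows "fa_star T p q \<in> ue_ideal sc br"
  using assms(1) unfolding ue_ideal_eq_span
proof (induction p rule: fa_span.induct)
  case zero then show ?case by (simp add: fa_star_zero_left fa_span.zero)
next
  case (step s r c)
  have "fa_fin s" "fa_fin r" using step(1,2) ue_gens_fin fa_span_fin by blast+
  then have "fa_star T (\<lambda>w. c * s w + r w) q = (\<lambda>w. c * fa_star T s q w + 1 * fa_star T r q w)"
    by (simp add: fa_star_lin_left)
  moreover have "(\<lambda>w. c * fa_star T s q w + 1 * fa_star T r q w) \<in> ue_ideal sc br"
    using fa_star_gen_in_ideal[OF step(1) assms(2)] step(3)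
    by (intro ue_ideal_lin) (simp_all add: ue_ideal_eq_span)
  ultimately show ?case by (simp add: ue_ideal_eq_span)
qed

lemma fa_star_cong_left:
  assumes "fa_fin p" "fa_fin p'" "fa_fin q" "ueq sc br p p'"
  shows "ueq sc br (fa_star T p q) (fa_star T p' q)"
proof -
  have "p = (\<lambda>w. 1 * fa_diff p p' w + p' w)" unfolding fa_diff_def by simp
  then have "fa_star T p q = (\<lambda>w. 1 * fa_star T (fa_diff p p') q w + fa_star T p' q w)"
    using fa_star_lin_left[OF fa_fin_diff[OF assms(1,2)] assms(2), of T 1 q] by metis
  then have "fa_diff (fa_star T p q) (fa_star T p' q) = fa_star T (fa_diff p p') q"
    unfolding fa_diff_def by simp
  then show ?thesis
    using fa_star_ideal_left assms(3,4) unfolding ueq_def by simp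
qed

lemma word_star_fin: "fa_fin q \<Longrightarrow> fa_fin (word_star T u q)"
  unfolding word_star_def by (intro fa_fin_sum fa_fin_mult fa_fin_word T_fin) auto

lemma fa_star_fin: "fa_fin p \<Longrightarrow> fa_fin q \<Longrightarrow> fa_fin (fa_star T p q)"
  by (simp add: fa_star_eq_sum fa_fin_def[of p] fa_fin_sum word_star_fin)

lemma fa_star_cong_right:
  assumes "fa_fin p" "fa_fin q" "fa_fin q'" "ueq sc br q q'"
  shows "ueq sc br (fa_star T p q) (fa_star T p q')"
proof -
  have word: "ueq sc br (word_star T u q) (word_star T u q')" for u
    unfolding word_star_def using assms(2-4)
    by (intro ueq_sum ueq_mult_left T_cong_right T_fin) auto
  have "ueq sc br (\<lambda>w. p u * word_star T u q w) (\<lambda>w. p u * word_star T u q' w)" for u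
    using ueq_lin[OF word[of u] word[of u], of "p u" 0] by simp
  then have "ueq sc br (\<lambda>w. \<Sum>u\<in>{u. p u \<noteq> 0}. p u * word_star T u q w)
      (\<lambda>w. \<Sum>u\<in>{u. p u \<noteq> 0}. p u * word_star T u q' w)"
    using assms(1) by (intro ueq_sum) (auto simp: fa_fin_def)
  then show ?thesis using assms(1) by (simp add: fa_star_eq_sum)
qed

lemma fa_star_letter_ueq:
  assumes "fa_fin q"
  shows "ueq sc br (fa_star T (fa_word [x]) q) (fa_add (fa_mult (fa_word [x]) q) (T (fa_word [x]) q))"
proof -
  have "ueq sc br (\<lambda>w. 1 * T (fa_word [x]) q w + 1 * fa_mult (fa_word [x]) (T fa_one q) w)
     (\<lambda>w. 1 * T (fa_word [x]) q w + 1 * fa_mult (fa_word [x]) q w)"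
    using assms by (intro ueq_lin ueq_refl ueq_mult_left T_one_left T_fin) simp_all
  then show ?thesis unfolding fa_star_letter fa_add_def by (simp add: add.commute)
qed

lemma star_prod_fin: "fa_fin (star_prod T xs)"
  by (induction xs) (simp_all add: star_prod_def fa_star_fin)

lemma star_prod_Cons: "star_prod T (x # xs) = fa_star T (fa_word [x]) (star_prod T xs)"
  by (simp add: star_prod_def)

end

section \<open>The recursion for \<open>\<phi>\<close>\<close>

locale post_lie_phi = extended_post_lie sc br tri T
  for sc :: "'k::comm_ring_1 \<Rightarrow> 'v::ab_group_add \<Rightarrow> 'v" and br tri T +
  fixes \<Phi> :: "('v, 'k) fa \<Rightarrow> ('v, 'k) fa"
  assumes phi: "phi_hom sc br tri T \<Phi>"
begin

lemma Phi_fin: "fa_fin p \<Longrightarrow> fa_fin (\<Phi> p)"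
  using phi unfolding phi_hom_def by (elim conjE) simp

lemma Phi_one: "ueq sc br (\<Phi> fa_one) fa_one"
  using phi unfolding phi_hom_def by (elim conjE)

lemma Phi_mult: "fa_fin p \<Longrightarrow> fa_fin q \<Longrightarrow> ueq sc br (\<Phi> (fa_mult p q)) (fa_star T (\<Phi> p) (\<Phi> q))"
  using phi unfolding phi_hom_def by (elim conjE) simp

lemma Phi_letter: "ueq sc br (\<Phi> (fa_word [x])) (fa_word [x])"
  using phi unfolding phi_hom_def by (elim conjE) simp

lemma Phi_word_Cons_star: "ueq sc br (\<Phi> (fa_word (x # xs))) (fa_star T (fa_word [x]) (\<Phi> (fa_word xs)))"
proof -
  have "ueq sc br (\<Phi> (fa_word ([x] @ xs))) (fa_star T (\<Phi> (fa_word [x])) (\<Phi> (fa_word xs)))"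
    unfolding fa_mult_word[symmetric] by (rule Phi_mult) simp_all
  also have "ueq sc br \<dots> (fa_star T (fa_word [x]) (\<Phi> (fa_word xs)))"
    by (intro fa_star_cong_left Phi_fin Phi_letter) simp_all
  finally show ?thesis by simp
qed

lemma Phi_word_Cons:
  "ueq sc br (\<Phi> (fa_word (x # xs)))
     (fa_add (fa_mult (fa_word [x]) (\<Phi> (fa_word xs))) (T (fa_word [x]) (\<Phi> (fa_word xs))))"
  by (rule ueq_trans[OF Phi_word_Cons_star fa_star_letter_ueq]) (simp add: Phi_fin)

lemma Phi_word_eq_star_prod: "ueq sc br (\<Phi> (fa_word xs)) (star_prod T xs)"
proof (induction xs)
  case Nil
  then show ?case using Phi_one by (simp add: star_prod_def fa_one_def)
next
  case (Cons x xs)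
  have "ueq sc br (\<Phi> (fa_word (x # xs))) (fa_star T (fa_word [x]) (\<Phi> (fa_word xs)))"
    by (rule Phi_word_Cons_star)
  also have "ueq sc br \<dots> (fa_star T (fa_word [x]) (star_prod T xs))"
    by (rule fa_star_cong_right[OF _ _ _ Cons.IH]) (simp_all add: Phi_fin star_prod_fin)
  finally show ?case by (simp add: star_prod_Cons)
qed

end

section \<open>Set partitions of an initial segment\<close>

text \<open>A partition of \<open>{..<Suc n}\<close> is built from one of \<open>{..<n}\<close>: the old points are shifted up
by one and the new point \<open>0\<close> (the index of the new first letter \<open>x\<close> of \<open>x # ys\<close>) is either a
block of its own or added to one block \<open>B\<close>.\<close>

definition shift_block :: "nat set \<Rightarrow> nat set" where
  "shift_block C = Suc ` C"

definition unshift_block :: "nat set \<Rightarrow> nat set" where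
  "unshift_block C = {k. Suc k \<in> C}"

definition shift_into :: "nat set \<Rightarrow> nat set \<Rightarrow> nat set" where
  "shift_into B C = (if C = B then insert 0 (shift_block C) else shift_block C)"

definition extend_new :: "nat set set \<Rightarrow> nat set set" where
  "extend_new Q = insert {0} (shift_block ` Q)"

definition extend_into :: "nat set set \<Rightarrow> nat set \<Rightarrow> nat set set" where
  "extend_into Q B = shift_into B ` Q"

abbreviation partitions :: "nat \<Rightarrow> nat set set set" where
  "partitions n \<equiv> {P. partition_on {..<n} P}"

lemma unshift_shift_block[simp]: "unshift_block (shift_block C) = C"
  unfolding unshift_block_def shift_block_def by auto

lemma unshift_insert_0_shift_block[simp]: "unshift_block (insert 0 (shift_block C)) = C"
  unfolding unshift_block_def shift_block_def by auto

lemma unshift_shift_into[simp]: "unshift_block (shift_into B C) = C"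
  unfolding shift_into_def by simp

lemma zero_notin_shift_block[simp]: "0 \<notin> shift_block C"
  unfolding shift_block_def by auto

lemma shift_unshift_block: "shift_block (unshift_block C) = C - {0}"
  unfolding unshift_block_def shift_block_def
proof (rule set_eqI)
  fix x show "x \<in> Suc ` {k. Suc k \<in> C} \<longleftrightarrow> x \<in> C - {0}" by (cases x) auto
qed

lemma shift_block_neq_singleton_0[simp]: "shift_block C \<noteq> {0}"
  using zero_notin_shift_block by blast

lemma partition_lessThan_finite_block: "partition_on {..<(m::nat)} P \<Longrightarrow> B \<in> P \<Longrightarrow> finite B"
proof -
  assume P: "partition_on {..<m} P" and B: "B \<in> P"
  have "B \<subseteq> \<Union>P" using B by (rule Union_upper)
  also have "\<dots> = {..<m}" using P by (simp add: partition_on_def)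
  finally show "finite B" by (rule finite_subset[OF _ finite_lessThan])
qed

lemma partition_block_nonempty: "partition_on A P \<Longrightarrow> B \<in> P \<Longrightarrow> B \<noteq> {}"
  unfolding partition_on_def by auto

lemma partition_block_eq:
  "partition_on A P \<Longrightarrow> B \<in> P \<Longrightarrow> C \<in> P \<Longrightarrow> x \<in> B \<Longrightarrow> x \<in> C \<Longrightarrow> B = C"
  unfolding partition_on_def disjoint_def by auto

lemma partition_extend_new:
  assumes Q: "partition_on {..<n} Q"
  shows "partition_on {..<Suc n} (extend_new Q)"
proof (rule partition_onI)
  show "\<Union>(extend_new Q) = {..<Suc n}"
  proof -
    have "\<Union>Q = {..<n}" using Q by (simp add: partition_on_def)
    then have "\<Union>(shift_block ` Q) = Suc ` {..<n}" unfolding shift_block_def by auto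
    then show ?thesis unfolding extend_new_def by (simp add: lessThan_Suc_eq_insert_0)
  qed
  show "{} \<notin> extend_new Q"
    unfolding extend_new_def shift_block_def using partition_block_nonempty[OF Q] by auto
  fix p q assume pq: "p \<in> extend_new Q" "q \<in> extend_new Q" "p \<noteq> q"
  have sh: "disjnt (shift_block C) (shift_block D)" if "C \<in> Q" "D \<in> Q" "C \<noteq> D" for C D
  proof -
    have "disjnt C D" using partition_block_eq[OF Q that(1,2)] that(3) unfolding disjnt_def by blast
    then show ?thesis unfolding shift_block_def disjnt_def by auto
  qed
  have z: "disjnt {0} (shift_block C)" for C unfolding disjnt_def by simp
  from pq show "disjnt p q"
    unfolding extend_new_def using sh z by (auto simp: disjnt_sym)
qed

lemma partition_extend_into:
  assumes Q: "partition_on {..<n} Q" and B: "B \<in> Q"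
  shows "partition_on {..<Suc n} (extend_into Q B)"
proof (rule partition_onI)
  show "\<Union>(extend_into Q B) = {..<Suc n}"
  proof -
    have U: "\<Union>Q = {..<n}" using Q by (simp add: partition_on_def)
    have "\<Union>(extend_into Q B) = insert 0 (\<Union>(shift_block ` Q))"
      unfolding extend_into_def shift_into_def using B by (auto split: if_splits)
    also have "\<Union>(shift_block ` Q) = Suc ` {..<n}" using U unfolding shift_block_def by auto
    finally show ?thesis by (simp add: lessThan_Suc_eq_insert_0)
  qed
  show "{} \<notin> extend_into Q B"
    unfolding extend_into_def shift_into_def shift_block_def using partition_block_nonempty[OF Q] by auto
  fix p q assume pq: "p \<in> extend_into Q B" "q \<in> extend_into Q B" "p \<noteq> q"
  then obtain C D where C: "C \<in> Q" "p = shift_into B C" and D: "D \<in> Q" "q = shift_into B D"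
    unfolding extend_into_def by blast
  with pq have CD: "C \<noteq> D" by auto
  have "disjnt C D" using partition_block_eq[OF Q C(1) D(1)] CD unfolding disjnt_def by blast
  then have "disjnt (shift_block C) (shift_block D)" unfolding shift_block_def disjnt_def by auto
  moreover have "C \<noteq> B \<or> D \<noteq> B" using CD by blast
  ultimately show "disjnt p q"
    unfolding C(2) D(2) shift_into_def disjnt_def by auto
qed

lemma partition_unshift_block_eq:
  assumes P: "partition_on A P" and C: "C \<in> P" and D: "D \<in> P" and e: "unshift_block C = unshift_block D"
    and nz: "\<And>E. E \<in> P \<Longrightarrow> E \<noteq> {0}"
  shows "C = D"
proof -
  have "C - {0} = D - {0}" using arg_cong[OF e, of shift_block] by (simp add: shift_unshift_block)
  moreover have "C - {0} \<noteq> {}" using nz[OF C] partition_block_nonempty[OF P C] by blast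
  ultimately obtain y where "y \<in> C" "y \<in> D" by blast
  then show ?thesis using partition_block_eq[OF P C D] by blast
qed

lemma unshift_block_nonempty: "C \<noteq> {} \<Longrightarrow> C \<noteq> {0} \<Longrightarrow> unshift_block C \<noteq> {}"
proof -
  assume a: "C \<noteq> {}" "C \<noteq> {0}"
  have "\<exists>y\<in>C. y \<noteq> 0"
  proof (rule ccontr)
    assume "\<not> (\<exists>y\<in>C. y \<noteq> 0)"
    then have "C \<subseteq> {0}" by auto
    with a show False by (simp add: subset_singleton_iff)
  qed
  then obtain y where "y \<in> C" "y \<noteq> 0" by blast
  then obtain k where "y = Suc k" by (cases y) auto
  then show "unshift_block C \<noteq> {}" using \<open>y \<in> C\<close> unfolding unshift_block_def by auto
qed

lemma partition_unshift_block:
  assumes P: "partition_on A P" and nz: "\<And>E. E \<in> P \<Longrightarrow> E \<noteq> {0}"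
  shows "partition_on (unshift_block A) (unshift_block ` P)"
proof (rule partition_onI)
  have U: "\<Union>P = A" using P by (simp add: partition_on_def)
  show "\<Union>(unshift_block ` P) = unshift_block A"
  proof (rule set_eqI)
    fix x
    have "x \<in> \<Union>(unshift_block ` P) \<longleftrightarrow> Suc x \<in> \<Union>P" unfolding unshift_block_def by auto
    then show "x \<in> \<Union>(unshift_block ` P) \<longleftrightarrow> x \<in> unshift_block A" using U by (simp add: unshift_block_def)
  qed
  show "{} \<notin> unshift_block ` P"
  proof
    assume "{} \<in> unshift_block ` P"
    then obtain E where E: "E \<in> P" "unshift_block E = {}" by (auto simp: image_iff)
    then show False using unshift_block_nonempty[OF partition_block_nonempty[OF P E(1)] nz[OF E(1)]] by simp
  qed
  fix p q assume "p \<in> unshift_block ` P" "q \<in> unshift_block ` P" "p \<noteq> q"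
  then obtain C D where C: "C \<in> P" "p = unshift_block C" and D: "D \<in> P" "q = unshift_block D" "C \<noteq> D"
    by blast
  have "disjnt C D" using partition_block_eq[OF P C(1) D(1)] D(3) unfolding disjnt_def by blast
  then show "disjnt p q" unfolding C(2) D(2) unshift_block_def disjnt_def by auto
qed

lemma unshift_block_lessThan: "unshift_block {..<Suc n} = {..<n}" "unshift_block ({..<Suc n} - {0}) = {..<n}"
  unfolding unshift_block_def by auto

lemma partition_decomp_new:
  assumes P: "partition_on {..<Suc n} P" and z: "{0} \<in> P"
  shows "partition_on {..<n} (unshift_block ` (P - {{0}}))" "extend_new (unshift_block ` (P - {{0}})) = P"
proof -
  have P': "partition_on {..<Suc n} (insert {0} (P - {{0}}))" using P z by (simp add: insert_absorb)
  have z0: "0 \<notin> E" if "E \<in> P - {{0}}" for E using partition_block_eq[OF P z, of E 0] that by auto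
  have d: "disjnt {0} (\<Union>(P - {{0}}))" using z0 unfolding disjnt_def by auto
  have P2: "partition_on ({..<Suc n} - {0}) (P - {{0}})"
    using P' unfolding partition_on_insert[OF d] by blast
  show "partition_on {..<n} (unshift_block ` (P - {{0}}))"
    using partition_unshift_block[OF P2] unshift_block_lessThan(2) by auto
  have "shift_block ` unshift_block ` (P - {{0}}) = P - {{0}}"
  proof -
    have "shift_block (unshift_block E) = E" if "E \<in> P - {{0}}" for E using z0[OF that] by (simp add: shift_unshift_block)
    then show ?thesis by (simp add: image_image)
  qed
  then show "extend_new (unshift_block ` (P - {{0}})) = P" unfolding extend_new_def using z by auto
qed

lemma partition_decomp_into:
  assumes P: "partition_on {..<Suc n} P" and z: "{0} \<notin> P" and B0: "B0 \<in> P" "0 \<in> B0"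
  shows "partition_on {..<n} (unshift_block ` P)" "unshift_block B0 \<in> unshift_block ` P" "extend_into (unshift_block ` P) (unshift_block B0) = P"
proof -
  have nz: "E \<noteq> {0}" if "E \<in> P" for E using that z by auto
  show "partition_on {..<n} (unshift_block ` P)"
    using partition_unshift_block[OF P nz] unshift_block_lessThan(1) by simp
  show "unshift_block B0 \<in> unshift_block ` P" using B0 by simp
  have "shift_into (unshift_block B0) (unshift_block C) = C" if C: "C \<in> P" for C
  proof (cases "C = B0")
    case True
    then show ?thesis using B0 by (auto simp: shift_into_def shift_unshift_block)
  next
    case False
    then have "unshift_block C \<noteq> unshift_block B0" using partition_unshift_block_eq[OF P C B0(1) _ nz] by blast
    moreover have "0 \<notin> C" using partition_block_eq[OF P C B0(1)] False B0(2) by blast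
    ultimately show ?thesis by (simp add: shift_into_def shift_unshift_block)
  qed
  then show "extend_into (unshift_block ` P) (unshift_block B0) = P" unfolding extend_into_def by (simp add: image_image)
qed

lemma singleton_0_in_extend_new: "{0} \<in> extend_new Q" unfolding extend_new_def by simp

lemma singleton_0_notin_extend_into:
  assumes Q: "partition_on A Q" and B: "B \<in> Q" shows "{0} \<notin> extend_into Q B"
proof
  assume "{0} \<in> extend_into Q B"
  then obtain C where C: "C \<in> Q" "shift_into B C = {0}" unfolding extend_into_def by auto
  show False
  proof (cases "C = B")
    case True
    then have "shift_block C = {}" using C(2) unfolding shift_into_def by (auto simp: shift_block_def)
    then show False using partition_block_nonempty[OF Q C(1)] by (simp add: shift_block_def)
  next
    case False
    then show False using C(2) unfolding shift_into_def by simp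
  qed
qed

lemma finite_partitions: "finite (partitions n)"
  by (rule finitely_many_partition_on) simp

lemma partition_lessThan_finite: "partition_on {..<(n::nat)} Q \<Longrightarrow> finite Q"
  by (rule finite_elements) auto

lemma partition_block_of_0_the:
  assumes P: "partition_on A P" and B0: "B0 \<in> P" "0 \<in> B0"
  shows "(THE B. B \<in> P \<and> 0 \<in> B) = B0"
  by (rule the_equality) (use B0 partition_block_eq[OF P] in blast)+

definition extend :: "nat set set + nat set set \<times> nat set \<Rightarrow> nat set set" where
  "extend z = (case z of Inl Q \<Rightarrow> extend_new Q | Inr (Q, B) \<Rightarrow> extend_into Q B)"

definition restrict_partition :: "nat set set \<Rightarrow> nat set set + nat set set \<times> nat set" where
  "restrict_partition P = (if {0} \<in> P then Inl (unshift_block ` (P - {{0}}))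
     else Inr (unshift_block ` P, unshift_block (THE B. B \<in> P \<and> 0 \<in> B)))"

lemma restrict_partition_extend_new: "restrict_partition (extend_new Q) = Inl Q"
proof -
  have "extend_new Q - {{0}} = shift_block ` Q"
    unfolding extend_new_def using shift_block_neq_singleton_0 by blast
  then show ?thesis by (simp add: restrict_partition_def singleton_0_in_extend_new image_image)
qed

lemma restrict_partition_extend_into:
  assumes Q: "partition_on {..<n} Q" and B: "B \<in> Q"
  shows "restrict_partition (extend_into Q B) = Inr (Q, B)"
proof -
  have "(THE B'. B' \<in> extend_into Q B \<and> 0 \<in> B') = insert 0 (shift_block B)"
  proof (rule the_equality)
    show "insert 0 (shift_block B) \<in> extend_into Q B \<and> 0 \<in> insert 0 (shift_block B)"
      unfolding extend_into_def using B by (auto simp: shift_into_def intro!: image_eqI[of _ _ B])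
    fix B' assume "B' \<in> extend_into Q B \<and> 0 \<in> B'"
    then show "B' = insert 0 (shift_block B)"
      unfolding extend_into_def shift_into_def by (auto split: if_splits)
  qed
  moreover have "unshift_block ` extend_into Q B = Q"
    unfolding extend_into_def by (simp add: image_image)
  ultimately show ?thesis
    using singleton_0_notin_extend_into[OF Q B] by (simp add: restrict_partition_def)
qed

lemma extend_restrict_partition:
  assumes P: "partition_on {..<Suc n} P"
  shows "extend (restrict_partition P) = P"
    and "restrict_partition P \<in> Inl ` partitions n \<union> Inr ` (SIGMA Q:partitions n. Q)"
proof -
  have "extend (restrict_partition P) = P \<and>
      restrict_partition P \<in> Inl ` partitions n \<union> Inr ` (SIGMA Q:partitions n. Q)"
  proof (cases "{0} \<in> P")
    case True
    then show ?thesis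
      using partition_decomp_new[OF P True] by (simp add: extend_def restrict_partition_def)
  next
    case False
    have "0 \<in> \<Union>P" using P by (simp add: partition_on_def)
    then obtain B0 where B0: "B0 \<in> P" "0 \<in> B0" by blast
    show ?thesis
      using partition_decomp_into[OF P False B0] False partition_block_of_0_the[OF P B0]
      by (simp add: extend_def restrict_partition_def)
  qed
  then show "extend (restrict_partition P) = P"
    and "restrict_partition P \<in> Inl ` partitions n \<union> Inr ` (SIGMA Q:partitions n. Q)"
    by simp_all
qed

lemma bij_betw_extend:
  "bij_betw extend (Inl ` partitions n \<union> Inr ` (SIGMA Q:partitions n. Q)) (partitions (Suc n))"
proof (rule bij_betw_byWitness[where f' = restrict_partition])
  show "\<forall>z\<in>Inl ` partitions n \<union> Inr ` (SIGMA Q:partitions n. Q). restrict_partition (extend z) = z"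
    by (auto simp: extend_def restrict_partition_extend_new restrict_partition_extend_into)
  show "extend ` (Inl ` partitions n \<union> Inr ` (SIGMA Q:partitions n. Q)) \<subseteq> partitions (Suc n)"
    using partition_extend_new partition_extend_into by (auto simp: extend_def)
  show "\<forall>P\<in>partitions (Suc n). extend (restrict_partition P) = P"
    using extend_restrict_partition(1) by blast
  show "restrict_partition ` partitions (Suc n) \<subseteq> Inl ` partitions n \<union> Inr ` (SIGMA Q:partitions n. Q)"
    using extend_restrict_partition(2) by blast
qed

lemma sum_partitions_Suc:
  fixes F :: "nat set set \<Rightarrow> 'a::comm_monoid_add"
  shows "(\<Sum>P\<in>partitions (Suc n). F P) =
    (\<Sum>Q\<in>partitions n. F (extend_new Q)) + (\<Sum>Q\<in>partitions n. \<Sum>B\<in>Q. F (extend_into Q B))"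
proof -
  have fin: "finite (SIGMA Q:partitions n. Q)"
    by (auto intro: finite_partitions partition_lessThan_finite)
  have "(\<Sum>P\<in>partitions (Suc n). F P) = (\<Sum>z\<in>Inl ` partitions n \<union> Inr ` (SIGMA Q:partitions n. Q). F (extend z))"
    by (rule sum.reindex_bij_betw[OF bij_betw_extend, symmetric])
  also have "\<dots> = (\<Sum>z\<in>Inl ` partitions n. F (extend z)) + (\<Sum>z\<in>Inr ` (SIGMA Q:partitions n. Q). F (extend z))"
    using fin by (intro sum.union_disjoint) (auto intro: finite_partitions)
  also have "\<dots> = (\<Sum>Q\<in>partitions n. F (extend_new Q)) + (\<Sum>(Q, B)\<in>(SIGMA Q:partitions n. Q). F (extend_into Q B))"
    by (simp add: sum.reindex extend_def case_prod_unfold)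
  also have "\<dots> = (\<Sum>Q\<in>partitions n. F (extend_new Q)) + (\<Sum>Q\<in>partitions n. \<Sum>B\<in>Q. F (extend_into Q B))"
    using fin by (simp add: sum.Sigma finite_partitions partition_lessThan_finite)
  finally show ?thesis .
qed

lemma (in linorder) sorted_key_list_of_set_eqI:
  assumes "sorted_wrt (<) (map f xs)"
  shows "sorted_key_list_of_set f (set xs) = xs"
proof -
  have "distinct (map f xs)" using assms by (simp add: strict_sorted_iff)
  then interpret folding_insort_key "(\<le>)" "(<)" "set xs" f
    by unfold_locales (simp add: distinct_map)
  show ?thesis
    using assms \<open>distinct (map f xs)\<close> by (intro idem_if_sorted_distinct) (auto simp: strict_sorted_iff distinct_map)
qed

lemma (in linorder) sorted_key_list_of_set_strict:
  assumes "inj_on f A" "finite A"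
  shows "set (sorted_key_list_of_set f A) = A" "sorted_wrt (<) (map f (sorted_key_list_of_set f A))"
proof -
  interpret folding_insort_key "(\<le>)" "(<)" A f
    by unfold_locales (rule assms(1))
  show "set (sorted_key_list_of_set f A) = A" "sorted_wrt (<) (map f (sorted_key_list_of_set f A))"
    using assms(2) by simp_all
qed

abbreviation blocks_by_max :: "nat set set \<Rightarrow> nat set list" where
  "blocks_by_max Q \<equiv> sorted_key_list_of_set Max Q"

lemma inj_on_Max_partition:
  assumes Q: "partition_on {..<(n::nat)} Q" shows "inj_on Max Q"
proof (rule inj_onI)
  fix C D assume C: "C \<in> Q" and D: "D \<in> Q" and "Max C = Max D"
  moreover have "Max C \<in> C" "Max D \<in> D"
    using partition_lessThan_finite_block[OF Q] partition_block_nonempty[OF Q] C D by simp_all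
  ultimately show "C = D" using partition_block_eq[OF Q C D] by simp
qed

lemma blocks_by_max:
  assumes Q: "partition_on {..<(n::nat)} Q"
  shows "set (blocks_by_max Q) = Q" "sorted_wrt (<) (map Max (blocks_by_max Q))"
  using sorted_key_list_of_set_strict[OF inj_on_Max_partition[OF Q] partition_lessThan_finite[OF Q]] .

lemma distinct_blocks_by_max: "partition_on {..<(n::nat)} Q \<Longrightarrow> distinct (blocks_by_max Q)"
  using blocks_by_max(2) by (auto simp: strict_sorted_iff distinct_map)

lemma Max_shift_block: "finite C \<Longrightarrow> C \<noteq> {} \<Longrightarrow> Max (shift_block C) = Suc (Max C)"
  unfolding shift_block_def by (simp add: mono_Max_commute[symmetric] mono_Suc)

lemma Max_shift_into: "finite C \<Longrightarrow> C \<noteq> {} \<Longrightarrow> Max (shift_into B C) = Suc (Max C)"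
  using Max_shift_block[of C] unfolding shift_into_def by (cases "C = B") (simp_all add: shift_block_def)

lemma map_Max_blocks_shift:
  assumes Q: "partition_on {..<(n::nat)} Q" and f: "\<And>C. finite C \<Longrightarrow> C \<noteq> {} \<Longrightarrow> Max (f C) = Suc (Max C)"
  shows "map Max (map f (blocks_by_max Q)) = map Suc (map Max (blocks_by_max Q))"
  using blocks_by_max(1)[OF Q] partition_lessThan_finite_block[OF Q] partition_block_nonempty[OF Q] f
  by (auto simp: map_eq_conv)

lemma blocks_by_max_extend_into:
  assumes Q: "partition_on {..<n} Q"
  shows "blocks_by_max (extend_into Q B) = map (shift_into B) (blocks_by_max Q)"
proof -
  have "sorted_wrt (<) (map Max (map (shift_into B) (blocks_by_max Q)))"
    using blocks_by_max(2)[OF Q] map_Max_blocks_shift[OF Q Max_shift_into]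
    by (simp add: sorted_wrt_map del: map_map)
  then show ?thesis
    using sorted_key_list_of_set_eqI blocks_by_max(1)[OF Q] by (metis extend_into_def set_map)
qed

lemma blocks_by_max_extend_new:
  assumes Q: "partition_on {..<n} Q"
  shows "blocks_by_max (extend_new Q) = {0} # map shift_block (blocks_by_max Q)"
proof -
  have "sorted_wrt (<) (map Max ({0} # map shift_block (blocks_by_max Q)))"
    using blocks_by_max(2)[OF Q] map_Max_blocks_shift[OF Q Max_shift_block]
    by (simp add: sorted_wrt_map del: map_map)
  then show ?thesis
    using sorted_key_list_of_set_eqI blocks_by_max(1)[OF Q] by (metis extend_new_def list.set(2) set_map)
qed

section \<open>The partition sum\<close>

lemma sorted_list_of_set_Suc_image: "finite C \<Longrightarrow> sorted_list_of_set (Suc ` C) = map Suc (sorted_list_of_set C)"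
proof -
  assume C: "finite C"
  have "sorted_list_of_set (set (map Suc (sorted_list_of_set C))) = map Suc (sorted_list_of_set C)"
    by (rule sorted_list_of_set.idem_if_sorted_distinct)
      (use C in \<open>auto simp: sorted_map distinct_map\<close>)
  then show ?thesis using C by simp
qed

lemma sorted_list_of_set_insert_0_Suc_image: "finite C \<Longrightarrow> sorted_list_of_set (insert 0 (Suc ` C)) = 0 # map Suc (sorted_list_of_set C)"
proof -
  assume C: "finite C"
  have "sorted_list_of_set (set (0 # map Suc (sorted_list_of_set C))) = 0 # map Suc (sorted_list_of_set C)"
    by (rule sorted_list_of_set.idem_if_sorted_distinct)
      (use C in \<open>auto simp: sorted_map distinct_map\<close>)
  then show ?thesis using C by simp
qed

lemma block_elem_Suc_image: "finite C \<Longrightarrow> block_elem tri (x # ys) (Suc ` C) = block_elem tri ys C"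
  unfolding block_elem_def by (simp add: sorted_list_of_set_Suc_image comp_def)

lemma block_elem_insert_0:
  "finite C \<Longrightarrow> C \<noteq> {} \<Longrightarrow> block_elem tri (x # ys) (insert 0 (Suc ` C)) = tri x (block_elem tri ys C)"
proof -
  assume C: "finite C" "C \<noteq> {}"
  then have ne: "sorted_list_of_set C \<noteq> []" by simp
  show ?thesis
    unfolding block_elem_def sorted_list_of_set_insert_0_Suc_image[OF C(1)]
    using ne by (cases "sorted_list_of_set C") (simp_all add: comp_def)
qed

lemma block_elem_singleton_0: "block_elem tri (x # ys) {0} = x"
  unfolding block_elem_def by simp

definition X_word :: "('v::zero \<Rightarrow> 'v \<Rightarrow> 'v) \<Rightarrow> 'v list \<Rightarrow> nat set set \<Rightarrow> 'v list" where
  "X_word tri ys Q = map (block_elem tri ys) (blocks_by_max Q)"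

definition word_derivation :: "('v \<Rightarrow> 'v \<Rightarrow> 'v) \<Rightarrow> 'v \<Rightarrow> 'v list \<Rightarrow> ('v, 'k::comm_ring_1) fa" where
  "word_derivation tri x ws = (\<lambda>w. \<Sum>i<length ws. fa_word (ws[i := tri x (ws ! i)]) w)"

lemma X_word_extend_new:
  assumes Q: "partition_on {..<n} Q"
  shows "X_word tri (x # ys) (extend_new Q) = x # X_word tri ys Q"
proof -
  have "block_elem tri (x # ys) (shift_block C) = block_elem tri ys C" if "C \<in> set (blocks_by_max Q)" for C
    using that blocks_by_max(1)[OF Q] partition_lessThan_finite_block[OF Q] block_elem_Suc_image unfolding shift_block_def by blast
  then show ?thesis unfolding X_word_def blocks_by_max_extend_new[OF Q] by (simp add: block_elem_singleton_0)
qed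

lemma X_word_extend_into:
  assumes Q: "partition_on {..<n} Q" and B: "B \<in> Q"
  shows "X_word tri (x # ys) (extend_into Q B) =
    map (\<lambda>C. if C = B then tri x (block_elem tri ys C) else block_elem tri ys C) (blocks_by_max Q)"
proof -
  have "block_elem tri (x # ys) (shift_into B C) = (if C = B then tri x (block_elem tri ys C) else block_elem tri ys C)"
    if "C \<in> set (blocks_by_max Q)" for C
  proof -
    have C: "C \<in> Q" using that blocks_by_max(1)[OF Q] by simp
    have "finite C" "C \<noteq> {}"
      using partition_lessThan_finite_block[OF Q C] partition_block_nonempty[OF Q C] by simp_all
    then show ?thesis
      using block_elem_Suc_image block_elem_insert_0
      unfolding shift_into_def shift_block_def by (cases "C = B") simp_all
  qed
  then show ?thesis unfolding X_word_def blocks_by_max_extend_into[OF Q] by simp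
qed

lemma map_if_eq_nth:
  assumes "distinct L" "i < length L"
  shows "map (\<lambda>C. if C = L ! i then g C else h C) L = (map h L)[i := g (L ! i)]"
proof (rule nth_equalityI, simp)
  fix j assume "j < length (map (\<lambda>C. if C = L ! i then g C else h C) L)"
  then have j: "j < length L" by simp
  have "L ! j = L ! i \<longleftrightarrow> j = i" using assms j nth_eq_iff_index_eq by blast
  then show "map (\<lambda>C. if C = L ! i then g C else h C) L ! j = (map h L)[i := g (L ! i)] ! j"
    using j assms(2) by (auto simp: nth_list_update)
qed

lemma sum_X_word_extend_into:
  assumes Q: "partition_on {..<n} Q"
  shows "(\<Sum>B\<in>Q. fa_word (X_word tri (x # ys) (extend_into Q B)) w) = (word_derivation tri x (X_word tri ys Q) w :: 'k::comm_ring_1)"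
proof -
  let ?L = "blocks_by_max Q"
  have bij: "bij_betw ((!) ?L) {..<length ?L} Q"
    by (rule bij_betw_nth) (simp_all add: blocks_by_max(1)[OF Q] distinct_blocks_by_max[OF Q])
  have "(\<Sum>B\<in>Q. fa_word (X_word tri (x # ys) (extend_into Q B)) w :: 'k) =
      (\<Sum>i<length ?L. fa_word (X_word tri (x # ys) (extend_into Q (?L ! i))) w)"
    by (rule sum.reindex_bij_betw[OF bij, symmetric])
  also have "\<dots> = (\<Sum>i<length ?L. fa_word ((X_word tri ys Q)[i := tri x (X_word tri ys Q ! i)]) w)"
  proof (rule sum.cong[OF refl])
    fix i assume i: "i \<in> {..<length ?L}"
    have Bi: "?L ! i \<in> Q" using i blocks_by_max(1)[OF Q] nth_mem by fastforce
    show "fa_word (X_word tri (x # ys) (extend_into Q (?L ! i))) w = (fa_word ((X_word tri ys Q)[i := tri x (X_word tri ys Q ! i)]) w :: 'k)"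
      unfolding X_word_extend_into[OF Q Bi] map_if_eq_nth[OF distinct_blocks_by_max[OF Q] i[simplified]]
      using i by (simp add: X_word_def)
  qed
  also have "\<dots> = word_derivation tri x (X_word tri ys Q) w" unfolding word_derivation_def by (simp add: X_word_def)
  finally show ?thesis .
qed

lemma partition_sum_Cons:
  "partition_sum tri (x # ys) =
    fa_add (\<lambda>w. \<Sum>Q\<in>partitions (length ys). fa_word (x # X_word tri ys Q) w)
      (\<lambda>w. \<Sum>Q\<in>partitions (length ys). (word_derivation tri x (X_word tri ys Q) w :: 'k::comm_ring_1))"
proof (rule ext)
  fix w
  have "partition_sum tri (x # ys) w =
      (\<Sum>P\<in>partitions (Suc (length ys)). fa_word (X_word tri (x # ys) P) w :: 'k)"
    unfolding partition_sum_def X_part_def X_word_def by simp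
  also have "\<dots> = (\<Sum>Q\<in>partitions (length ys). fa_word (X_word tri (x # ys) (extend_new Q)) w)
      + (\<Sum>Q\<in>partitions (length ys). \<Sum>B\<in>Q. fa_word (X_word tri (x # ys) (extend_into Q B)) w)"
    by (rule sum_partitions_Suc)
  also have "\<dots> = (\<Sum>Q\<in>partitions (length ys). fa_word (x # X_word tri ys Q) w)
      + (\<Sum>Q\<in>partitions (length ys). word_derivation tri x (X_word tri ys Q) w)"
    by (intro arg_cong2[where f = "(+)"] sum.cong refl)
      (simp_all add: X_word_extend_new sum_X_word_extend_into)
  finally show "partition_sum tri (x # ys) w =
      fa_add (\<lambda>w. \<Sum>Q\<in>partitions (length ys). fa_word (x # X_word tri ys Q) w)
        (\<lambda>w. \<Sum>Q\<in>partitions (length ys). (word_derivation tri x (X_word tri ys Q) w :: 'k)) w"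
    by (simp add: fa_add_def)
qed

lemma partition_sum_Nil: "partition_sum tri [] = (fa_one :: ('v::zero, 'k::comm_ring_1) fa)"
proof -
  have "{P. partition_on ({} :: nat set) P} = {{}}"
    by (auto simp: partition_on_empty)
  moreover have "blocks_by_max {} = []"
    using sorted_key_list_of_set_eqI[of Max "[]"] by simp
  ultimately show ?thesis
    unfolding partition_sum_def X_part_def by (simp add: fa_one_def)
qed

lemma partition_sum_eq_X_word:
  "partition_sum tri ys = (\<lambda>w. \<Sum>Q\<in>partitions (length ys). (fa_word (X_word tri ys Q) w :: 'k::comm_ring_1))"
  unfolding partition_sum_def X_part_def X_word_def ..

lemma partition_sum_fin: "fa_fin (partition_sum tri ys :: ('v::zero, 'k::comm_ring_1) fa)"
  unfolding partition_sum_eq_X_word by (rule fa_fin_sum) (simp_all add: finite_partitions)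

lemma fa_mult_letter_partition_sum:
  "fa_mult (fa_word [x]) (partition_sum tri ys) =
    (\<lambda>w. \<Sum>Q\<in>partitions (length ys). (fa_word (x # X_word tri ys Q) w :: 'k::comm_ring_1))"
  unfolding partition_sum_eq_X_word fa_mult_sum_right' by (simp add: fa_mult_word)

lemma word_derivation_fin: "fa_fin (word_derivation tri x ws :: ('v, 'k::comm_ring_1) fa)"
  unfolding word_derivation_def by (rule fa_fin_sum) simp_all

lemma word_derivation_Nil: "word_derivation tri x [] = (\<lambda>w. 0)"
  unfolding word_derivation_def by simp

lemma word_derivation_Cons:
  "(word_derivation tri x (y # ws) :: ('v, 'k::comm_ring_1) fa) =
    (\<lambda>w. fa_mult (fa_word [y]) (word_derivation tri x ws) w + fa_mult (fa_word [tri x y]) (fa_word ws) w)"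
  unfolding word_derivation_def fa_mult_sum_right' fa_mult_word length_Cons sum.lessThan_Suc_shift
  by (simp add: add.commute)

context extended_post_lie
begin

text \<open>The Leibniz rule \<open>x \<triangleright> (y w) = (x \<triangleright> y) w + y (x \<triangleright> w)\<close>, from the coproduct of the
generator \<open>x\<close>.\<close>

lemma T_letter_word: "ueq sc br (T (fa_word [x]) (fa_word ws)) (word_derivation tri x ws)"
proof (induction ws)
  case Nil
  have "ueq sc br (T (fa_word [x]) fa_one) (fa_scale (fa_eps (fa_word [x])) fa_one)"
    by (rule T_one_right) simp
  also have "fa_scale (fa_eps (fa_word [x])) fa_one = (\<lambda>w. 0 :: 'k)"
    unfolding fa_scale_def fa_eps_def fa_word_def by simp
  finally show ?case by (simp add: word_derivation_Nil fa_one_def)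
next
  case (Cons y ws)
  let ?x = "fa_word [x]" and ?y = "fa_word [y]" and ?ws = "fa_word ws"
  have "ueq sc br (T ?x (fa_mult ?y ?ws))
      (\<lambda>w. 1 * fa_mult (T fa_one ?y) (T ?x ?ws) w + 1 * fa_mult (T ?x ?y) (T fa_one ?ws) w)"
    using T_word_mult[of ?y ?ws "[x]"] by (simp add: Pow_lessThan_1 flip: fa_one_def)
  also have "ueq sc br \<dots>
      (\<lambda>w. 1 * fa_mult ?y (word_derivation tri x ws) w + 1 * fa_mult (fa_word [tri x y]) ?ws w)"
  proof (rule ueq_lin)
    show "ueq sc br (fa_mult (T fa_one ?y) (T ?x ?ws)) (fa_mult ?y (word_derivation tri x ws))"
      by (rule ueq_mult[OF _ _ _ _ T_one_left Cons.IH]) (simp_all add: T_fin word_derivation_fin)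
    show "ueq sc br (fa_mult (T ?x ?y) (T fa_one ?ws)) (fa_mult (fa_word [tri x y]) ?ws)"
      by (rule ueq_mult[OF _ _ _ _ T_letters T_one_left]) (simp_all add: T_fin)
  qed
  finally show ?case by (simp add: word_derivation_Cons fa_mult_word)
qed

lemma T_letter_partition_sum:
  "ueq sc br (T (fa_word [x]) (partition_sum tri ys))
     (\<lambda>w. \<Sum>Q\<in>partitions (length ys). word_derivation tri x (X_word tri ys Q) w)"
proof -
  have "ueq sc br (T (fa_word [x]) (partition_sum tri ys))
      (\<lambda>w. \<Sum>Q\<in>partitions (length ys). T (fa_word [x]) (fa_word (X_word tri ys Q)) w)"
    unfolding partition_sum_eq_X_word by (rule T_sum_right) (simp_all add: finite_partitions)
  also have "ueq sc br \<dots> (\<lambda>w. \<Sum>Q\<in>partitions (length ys). word_derivation tri x (X_word tri ys Q) w)"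
    by (rule ueq_sum) (simp_all add: finite_partitions T_letter_word)
  finally show ?thesis .
qed

lemma star_prod_eq_partition_sum: "ueq sc br (star_prod T ys) (partition_sum tri ys)"
proof (induction ys)
  case Nil
  then show ?case by (simp add: star_prod_def partition_sum_Nil)
next
  case (Cons x ys)
  let ?x = "fa_word [x]" and ?ps = "partition_sum tri ys" and ?sp = "star_prod T ys"
  have "ueq sc br (star_prod T (x # ys)) (fa_add (fa_mult ?x ?sp) (T ?x ?sp))"
    unfolding star_prod_Cons by (rule fa_star_letter_ueq[OF star_prod_fin])
  also have "ueq sc br \<dots> (fa_add (fa_mult ?x ?ps) (T ?x ?ps))"
    using Cons.IH by (intro ueq_add ueq_mult_left T_cong_right) (simp_all add: star_prod_fin partition_sum_fin)
  also have "ueq sc br \<dots> (partition_sum tri (x # ys))"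
    unfolding partition_sum_Cons
    by (intro ueq_add ueq_eqI fa_mult_letter_partition_sum T_letter_partition_sum)
  finally show ?case .
qed

end

text \<open>The post-Lie axioms enter only through the existence of \<open>T\<close> and \<open>\<Phi>\<close>, whose
properties are recorded in \<open>ext_post_lie\<close> and \<open>phi_hom\<close>.\<close>

theorem mainTheorem2:
  fixes sc :: "'k::real_normed_field \<Rightarrow> 'v::ab_group_add \<Rightarrow> 'v"
    and br tri :: "'v \<Rightarrow> 'v \<Rightarrow> 'v"
    and T :: "('v, 'k) fa \<Rightarrow> ('v, 'k) fa \<Rightarrow> ('v, 'k) fa"
    and \<Phi> :: "('v, 'k) fa \<Rightarrow> ('v, 'k) fa"
    and x :: 'v and xs :: "'v list"
  assumes "post_lie_algebra sc br tri"
    and "ext_post_lie sc br tri T"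
    and "phi_hom sc br tri T \<Phi>"
  shows "ueq sc br (\<Phi> (fa_word (x # xs)))
           (fa_add (fa_mult (fa_word [x]) (\<Phi> (fa_word xs))) (T (fa_word [x]) (\<Phi> (fa_word xs))))
       \<and> ueq sc br (\<Phi> (fa_word (x # xs))) (star_prod T (x # xs))
       \<and> ueq sc br (star_prod T (x # xs)) (partition_sum tri (x # xs))"
proof -
  interpret post_lie_phi sc br tri T \<Phi>
    using assms(2,3) by unfold_locales
  show ?thesis
    using Phi_word_Cons Phi_word_eq_star_prod star_prod_eq_partition_sum by blast
qed

end
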